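(* Let $\mathbb{F}_d$ be a field with the discrete topology, let $G$ be an effective ample Hausdorff groupoid, and let $\sigma\colon G^{(2)} \to \mathbb{F}_d^\times$ be a continuous $2$-cocycle. Then $A_{\mathbb{F}_d}(G,\sigma)$ is simple if and only if $G$ is minimal.
   Context: Groupoids are locally compact Hausdorff topological groupoids; $G$ is ample if it has a basis of compact open bisections; $G$ is effective if the interior of its isotropy $\{\gamma : r(\gamma) = s(\gamma)\}$ equals $G^{(0)}$. A subset $U \subseteq G^{(0)}$ is invariant if for all $\gamma\in G$, $s(\gamma)\in U \iff r(\gamma)\in U$; $G$ is minimal if $G^{(0)}$ has no open invariant subsets other than $\varnothing$ and $G^{(0)}$. A continuous $2$-cocycle is a continuous (locally constant) $\sigma\colon G^{(2)} \to \mathbb{F}_d^\times$ with $\sigma(\alpha,\beta)\sigma(\alpha\beta,\gamma) = \sigma(\alpha,\beta\gamma)\sigma(\beta,\gamma)$ and $\sigma(r(\gamma),\gamma)=1=\sigma(\gamma,s(\gamma))$. $A_{\mathbb{F}_d}(G,\sigma)$ is the $\mathbb{F}_d$-algebra of locally constant compactly supported functions $G\to\mathbb{F}_d$ with multiplication $(fg)(\gamma) = \sum_{\alpha\beta=\gamma}\sigma(\alpha,\beta)f(\alpha)g(\beta)$; simple means it has no two-sided ideals other than $\{0\}$ and itself. *)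

theory Defs
  imports "HOL-Analysis.Analysis"
begin

text \<open>A groupoid is given by its set of arrows (the carrier of a topology T),
  a partial multiplication m (only meaningful on composable pairs), inversion i,
  source s and range r.\<close>

definition composable :: "'g topology \<Rightarrow> ('g \<Rightarrow> 'g) \<Rightarrow> ('g \<Rightarrow> 'g) \<Rightarrow> ('g \<times> 'g) set"
  where "composable T s r = {(a, b). a \<in> topspace T \<and> b \<in> topspace T \<and> s a = r b}"

definition units :: "'g topology \<Rightarrow> ('g \<Rightarrow> 'g) \<Rightarrow> 'g set"
  where "units T s = s ` topspace T"

definition groupoid ::
  "'g topology \<Rightarrow> ('g \<Rightarrow> 'g \<Rightarrow> 'g) \<Rightarrow> ('g \<Rightarrow> 'g) \<Rightarrow> ('g \<Rightarrow> 'g) \<Rightarrow> ('g \<Rightarrow> 'g) \<Rightarrow> bool"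
  where "groupoid T m i s r \<longleftrightarrow>
    (let G = topspace T in
      (\<forall>a\<in>G. s a \<in> G \<and> r a \<in> G \<and> i a \<in> G) \<and>
      (\<forall>a\<in>G. s (s a) = s a \<and> r (s a) = s a \<and> s (r a) = r a \<and> r (r a) = r a) \<and>
      (\<forall>a\<in>G. \<forall>b\<in>G. s a = r b \<longrightarrow> m a b \<in> G \<and> s (m a b) = s b \<and> r (m a b) = r a) \<and>
      (\<forall>a\<in>G. \<forall>b\<in>G. \<forall>c\<in>G. s a = r b \<longrightarrow> s b = r c \<longrightarrow> m (m a b) c = m a (m b c)) \<and>
      (\<forall>a\<in>G. m (r a) a = a \<and> m a (s a) = a) \<and>
      (\<forall>a\<in>G. s (i a) = r a \<and> r (i a) = s a \<and> m a (i a) = r a \<and> m (i a) a = s a))"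

definition lch_top_groupoid ::
  "'g topology \<Rightarrow> ('g \<Rightarrow> 'g \<Rightarrow> 'g) \<Rightarrow> ('g \<Rightarrow> 'g) \<Rightarrow> ('g \<Rightarrow> 'g) \<Rightarrow> ('g \<Rightarrow> 'g) \<Rightarrow> bool"
  where "lch_top_groupoid T m i s r \<longleftrightarrow>
    groupoid T m i s r \<and> Hausdorff_space T \<and> locally_compact_space T \<and>
    continuous_map (subtopology (prod_topology T T) (composable T s r)) T (\<lambda>(a, b). m a b) \<and>
    continuous_map T T i \<and> continuous_map T T s \<and> continuous_map T T r"

definition open_bisection ::
  "'g topology \<Rightarrow> ('g \<Rightarrow> 'g) \<Rightarrow> ('g \<Rightarrow> 'g) \<Rightarrow> 'g set \<Rightarrow> bool"
  where "open_bisection T s r B \<longleftrightarrow>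
    openin T B \<and>
    openin (subtopology T (units T s)) (r ` B) \<and> openin (subtopology T (units T s)) (s ` B) \<and>
    homeomorphic_map (subtopology T B) (subtopology T (r ` B)) r \<and>
    homeomorphic_map (subtopology T B) (subtopology T (s ` B)) s"

definition ample :: "'g topology \<Rightarrow> ('g \<Rightarrow> 'g) \<Rightarrow> ('g \<Rightarrow> 'g) \<Rightarrow> bool"
  where "ample T s r \<longleftrightarrow>
    (\<forall>U x. openin T U \<and> x \<in> U \<longrightarrow>
       (\<exists>B. open_bisection T s r B \<and> compactin T B \<and> x \<in> B \<and> B \<subseteq> U))"

definition isotropy :: "'g topology \<Rightarrow> ('g \<Rightarrow> 'g) \<Rightarrow> ('g \<Rightarrow> 'g) \<Rightarrow> 'g set"
  where "isotropy T s r = {g \<in> topspace T. r g = s g}"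

definition effective :: "'g topology \<Rightarrow> ('g \<Rightarrow> 'g) \<Rightarrow> ('g \<Rightarrow> 'g) \<Rightarrow> bool"
  where "effective T s r \<longleftrightarrow> T interior_of (isotropy T s r) = units T s"

definition invariant :: "'g topology \<Rightarrow> ('g \<Rightarrow> 'g) \<Rightarrow> ('g \<Rightarrow> 'g) \<Rightarrow> 'g set \<Rightarrow> bool"
  where "invariant T s r U \<longleftrightarrow> U \<subseteq> units T s \<and>
    (\<forall>g\<in>topspace T. s g \<in> U \<longleftrightarrow> r g \<in> U)"

definition minimal :: "'g topology \<Rightarrow> ('g \<Rightarrow> 'g) \<Rightarrow> ('g \<Rightarrow> 'g) \<Rightarrow> bool"
  where "minimal T s r \<longleftrightarrow>
    (\<forall>U. openin (subtopology T (units T s)) U \<and> invariant T s r U \<longrightarrow>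
        U = {} \<or> U = units T s)"

text \<open>Continuous 2-cocycle with values in the multiplicative group of a discrete
  field: locally constant on the composable pairs, nonzero, cocycle identity,
  normalised.\<close>
definition cocycle ::
  "'g topology \<Rightarrow> ('g \<Rightarrow> 'g \<Rightarrow> 'g) \<Rightarrow> ('g \<Rightarrow> 'g) \<Rightarrow> ('g \<Rightarrow> 'g) \<Rightarrow> ('g \<times> 'g \<Rightarrow> 'k::field) \<Rightarrow> bool"
  where "cocycle T m s r \<sigma> \<longleftrightarrow>
    (\<forall>p\<in>composable T s r. \<sigma> p \<noteq> 0) \<and>
    (\<forall>p\<in>composable T s r. \<exists>W. openin (prod_topology T T) W \<and> p \<in> W \<and>
        (\<forall>q\<in>W \<inter> composable T s r. \<sigma> q = \<sigma> p)) \<and>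
    (\<forall>a\<in>topspace T. \<forall>b\<in>topspace T. \<forall>c\<in>topspace T. s a = r b \<longrightarrow> s b = r c \<longrightarrow>
        \<sigma> (a, b) * \<sigma> (m a b, c) = \<sigma> (a, m b c) * \<sigma> (b, c)) \<and>
    (\<forall>g\<in>topspace T. \<sigma> (r g, g) = 1 \<and> \<sigma> (g, s g) = 1)"

text \<open>Steinberg algebra: locally constant, compactly supported functions G \<rightarrow> k
  (extended by 0 outside G), with twisted convolution.\<close>
definition steinberg :: "'g topology \<Rightarrow> ('g \<Rightarrow> 'k::field) set"
  where "steinberg T = {f.
     (\<forall>g. g \<notin> topspace T \<longrightarrow> f g = 0) \<and>
     (\<forall>x\<in>topspace T. \<exists>W. openin T W \<and> x \<in> W \<and> (\<forall>y\<in>W. f y = f x)) \<and>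
     (\<exists>K. compactin T K \<and> (\<forall>g. g \<notin> K \<longrightarrow> f g = 0))}"

definition conv ::
  "'g topology \<Rightarrow> ('g \<Rightarrow> 'g \<Rightarrow> 'g) \<Rightarrow> ('g \<Rightarrow> 'g) \<Rightarrow> ('g \<Rightarrow> 'g) \<Rightarrow> ('g \<times> 'g \<Rightarrow> 'k::field)
    \<Rightarrow> ('g \<Rightarrow> 'k) \<Rightarrow> ('g \<Rightarrow> 'k) \<Rightarrow> 'g \<Rightarrow> 'k"
  where "conv T m s r \<sigma> f h \<gamma> =
    (\<Sum>(a, b) \<in> {(a, b). (a, b) \<in> composable T s r \<and> m a b = \<gamma> \<and> f a \<noteq> 0 \<and> h b \<noteq> 0}.
        \<sigma> (a, b) * f a * h b)"

definition two_sided_ideal ::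
  "'g topology \<Rightarrow> ('g \<Rightarrow> 'g \<Rightarrow> 'g) \<Rightarrow> ('g \<Rightarrow> 'g) \<Rightarrow> ('g \<Rightarrow> 'g) \<Rightarrow> ('g \<times> 'g \<Rightarrow> 'k::field)
    \<Rightarrow> ('g \<Rightarrow> 'k) set \<Rightarrow> bool"
  where "two_sided_ideal T m s r \<sigma> I \<longleftrightarrow>
    I \<subseteq> steinberg T \<and> (\<lambda>_. 0) \<in> I \<and>
    (\<forall>f\<in>I. \<forall>h\<in>I. (\<lambda>g. f g - h g) \<in> I) \<and>
    (\<forall>f\<in>I. \<forall>a\<in>steinberg T. conv T m s r \<sigma> a f \<in> I \<and> conv T m s r \<sigma> f a \<in> I)"

definition simple_steinberg ::
  "'g topology \<Rightarrow> ('g \<Rightarrow> 'g \<Rightarrow> 'g) \<Rightarrow> ('g \<Rightarrow> 'g) \<Rightarrow> ('g \<Rightarrow> 'g) \<Rightarrow> ('g \<times> 'g \<Rightarrow> 'k::field) \<Rightarrow> bool"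
  where "simple_steinberg T m s r \<sigma> \<longleftrightarrow>
    (\<forall>I. two_sided_ideal T m s r \<sigma> I \<longrightarrow> I = {\<lambda>_. 0} \<or> I = steinberg T)"

end

theory Submission
  imports Defs
begin

(*
  Simple implies minimal: a proper nonempty open invariant set U of units yields the proper
  nonzero ideal of functions supported on arrows with source in U.

  Minimal implies simple: let f be a nonzero element of an ideal I. Convolving with the
  indicator of a bisection through the inverse of an arrow where f does not vanish moves a
  nonzero value onto a unit. Since G is effective, compressing by the indicator of a small
  compact open set V of units on both sides kills everything off the unit space and leaves
  a nonzero multiple of 1_V in I. The union of all compact open sets of units whose
  indicator lies in I is open and invariant (indicators are transported along a compact open
  bisection B by 1_B and its twisted adjoint), hence equals G0 by minimality; finitely many of
  them then give a left unit for any given element of the algebra.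

  Twisted convolution preserves local constancy: near an arrow y the convolution is a fixed
  finite sum, since the range fibres of the compact support are finite and the finitely many
  factorisations of y move continuously along disjoint bisections.
*)

lemma openin_homeomorphic_image:
  assumes f: "homeomorphic_map (subtopology X S) (subtopology Y S') f"
    and "openin Y S'" "openin X D" "D \<subseteq> S"
  shows "openin Y (f ` D)"
proof -
  have "openin (subtopology X S) D"
    unfolding openin_subtopology using assms(3,4) by blast
  then have "openin (subtopology Y S') (f ` D)"
    using f homeomorphic_imp_open_map open_map_def by blast
  then show ?thesis
    using \<open>openin Y S'\<close> openin_trans_full by blast
qed

lemma Hausdorff_space_finite_disjoint_nhds:
  assumes X: "Hausdorff_space X" and A: "finite A" "A \<subseteq> topspace X"
  obtains P where "\<And>a. a \<in> A \<Longrightarrow> openin X (P a) \<and> a \<in> P a"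
    and "\<And>a b. a \<in> A \<Longrightarrow> b \<in> A \<Longrightarrow> a \<noteq> b \<Longrightarrow> disjnt (P a) (P b)"
proof -
  have "\<exists>U V. openin X U \<and> openin X V \<and> a \<in> U \<and> A - {a} \<subseteq> V \<and> disjnt U V"
    if "a \<in> A" for a
  proof -
    have "compactin X {a}" "compactin X (A - {a})"
      using that A by (auto intro: finite_imp_compactin)
    moreover have "disjnt {a} (A - {a})"
      by (simp add: disjnt_def)
    ultimately obtain U V where "openin X U" "openin X V" "{a} \<subseteq> U" "A - {a} \<subseteq> V" "disjnt U V"
      by (rule Hausdorff_space_compact_separation[OF X])
    then show ?thesis
      by blast
  qed
  then obtain U V where UV: "\<And>a. a \<in> A \<Longrightarrow>
      openin X (U a) \<and> openin X (V a) \<and> a \<in> U a \<and> A - {a} \<subseteq> V a \<and> disjnt (U a) (V a)"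
    by metis
  define P where "P a = U a \<inter> \<Inter>(V ` (A - {a}))" for a
  show thesis
  proof
    show "openin X (P a) \<and> a \<in> P a" if "a \<in> A" for a
      unfolding P_def using that UV A(1) by (auto intro!: openin_Int_Inter)
    show "disjnt (P a) (P b)" if "a \<in> A" "b \<in> A" "a \<noteq> b" for a b
    proof -
      have "P a \<subseteq> U a" "P b \<subseteq> V a"
        unfolding P_def using that by auto
      then show ?thesis
        using UV[OF \<open>a \<in> A\<close>] by (meson disjnt_subset1 disjnt_subset2)
    qed
  qed
qed

section \<open>Locally constant compactly supported functions\<close>

lemma steinbergI:
  assumes "\<And>x. x \<notin> topspace T \<Longrightarrow> f x = 0"
    and "\<And>x. x \<in> topspace T \<Longrightarrow> \<exists>W. openin T W \<and> x \<in> W \<and> (\<forall>y\<in>W. f y = f x)"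
    and "compactin T K" "\<And>x. x \<notin> K \<Longrightarrow> f x = 0"
  shows "f \<in> steinberg T"
  unfolding steinberg_def using assms by blast

lemma steinberg_vanishes: "f \<in> steinberg T \<Longrightarrow> x \<notin> topspace T \<Longrightarrow> f x = 0"
  unfolding steinberg_def by blast

lemma steinberg_locally_constant:
  "f \<in> steinberg T \<Longrightarrow> x \<in> topspace T \<Longrightarrow> \<exists>W. openin T W \<and> x \<in> W \<and> (\<forall>y\<in>W. f y = f x)"
  unfolding steinberg_def by blast

lemma compactin_steinberg_support:
  assumes f: "f \<in> steinberg T"
  shows "compactin T {x. f x \<noteq> 0}"
proof -
  obtain K where K: "compactin T K" "\<And>x. x \<notin> K \<Longrightarrow> f x = 0"
    using f unfolding steinberg_def by blast
  have "openin T {x \<in> topspace T. f x = 0}"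
  proof (subst openin_subopen, intro ballI)
    fix x assume x: "x \<in> {x \<in> topspace T. f x = 0}"
    then obtain W where W: "openin T W" "x \<in> W" "\<forall>y\<in>W. f y = f x"
      using steinberg_locally_constant[OF f] by blast
    then have "W \<subseteq> {x \<in> topspace T. f x = 0}"
      using x openin_subset by force
    with W show "\<exists>W. openin T W \<and> x \<in> W \<and> W \<subseteq> {x \<in> topspace T. f x = 0}"
      by blast
  qed
  moreover have "{x. f x \<noteq> 0} = topspace T - {x \<in> topspace T. f x = 0}"
    using steinberg_vanishes[OF f] by blast
  ultimately have "closedin T {x. f x \<noteq> 0}"
    by (simp add: closedin_diff)
  moreover have "{x. f x \<noteq> 0} \<subseteq> K"
    using K(2) by blast
  ultimately show ?thesis
    using closed_compactin K(1) by blast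
qed

lemma steinberg_zero: "(\<lambda>_. 0) \<in> steinberg T"
proof (rule steinbergI[where K = "{}"])
  show "\<exists>W. openin T W \<and> x \<in> W \<and> (\<forall>y\<in>W. 0 = 0)" if "x \<in> topspace T" for x
    using that openin_topspace by blast
qed simp_all

lemma steinberg_diff:
  assumes f: "f \<in> steinberg T" and h: "h \<in> steinberg T"
  shows "(\<lambda>x. f x - h x) \<in> steinberg T"
proof (rule steinbergI)
  show "compactin T ({x. f x \<noteq> 0} \<union> {x. h x \<noteq> 0})"
    by (intro compactin_Un compactin_steinberg_support f h)
  fix x assume x: "x \<in> topspace T"
  obtain V where V: "openin T V" "x \<in> V" "\<forall>y\<in>V. f y = f x"
    using steinberg_locally_constant[OF f x] by blast
  obtain W where W: "openin T W" "x \<in> W" "\<forall>y\<in>W. h y = h x"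
    using steinberg_locally_constant[OF h x] by blast
  have "f y - h y = f x - h x" if "y \<in> V \<inter> W" for y
    using that V(3) W(3) by (metis IntD1 IntD2)
  then show "\<exists>U. openin T U \<and> x \<in> U \<and> (\<forall>y\<in>U. f y - h y = f x - h x)"
    using V(1,2) W(1,2) by blast
qed (simp_all add: steinberg_vanishes[OF f] steinberg_vanishes[OF h])

lemma scaled_indicator_in_steinberg:
  assumes "Hausdorff_space T" "compactin T W" "openin T W"
  shows "(\<lambda>x. c * indicator W x) \<in> steinberg T"
proof (rule steinbergI[where K = W])
  fix x assume x: "x \<in> topspace T"
  have closed: "openin T (topspace T - W)"
    using compactin_imp_closedin assms(1,2) by blast
  show "\<exists>V. openin T V \<and> x \<in> V \<and> (\<forall>y\<in>V. c * indicator W y = c * indicator W x)"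
  proof (cases "x \<in> W")
    case True
    with assms(3) show ?thesis by (intro exI[of _ W]) simp
  next
    case False
    with x closed show ?thesis by (intro exI[of _ "topspace T - W"]) simp
  qed
qed (use assms openin_subset[OF assms(3)] in \<open>auto simp: indicator_def\<close>)

lemma indicator_in_steinberg:
  "Hausdorff_space T \<Longrightarrow> compactin T W \<Longrightarrow> openin T W \<Longrightarrow> indicator W \<in> steinberg T"
  using scaled_indicator_in_steinberg[where c = 1] by simp

section \<open>Groupoids\<close>

locale groupoid_on =
  fixes T :: "'g topology" and m :: "'g \<Rightarrow> 'g \<Rightarrow> 'g" and i s r :: "'g \<Rightarrow> 'g"
  assumes groupoid: "groupoid T m i s r"
begin

abbreviation "G \<equiv> topspace T"
abbreviation "G0 \<equiv> units T s"

lemma s_in_G [simp]: "a \<in> G \<Longrightarrow> s a \<in> G"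
  and r_in_G [simp]: "a \<in> G \<Longrightarrow> r a \<in> G"
  and i_in_G [simp]: "a \<in> G \<Longrightarrow> i a \<in> G"
  and s_s [simp]: "a \<in> G \<Longrightarrow> s (s a) = s a"
  and r_s [simp]: "a \<in> G \<Longrightarrow> r (s a) = s a"
  and s_r [simp]: "a \<in> G \<Longrightarrow> s (r a) = r a"
  and r_r [simp]: "a \<in> G \<Longrightarrow> r (r a) = r a"
  using groupoid unfolding groupoid_def Let_def by blast+

lemma mult_in_G [simp]: "a \<in> G \<Longrightarrow> b \<in> G \<Longrightarrow> s a = r b \<Longrightarrow> m a b \<in> G"
  and s_mult [simp]: "a \<in> G \<Longrightarrow> b \<in> G \<Longrightarrow> s a = r b \<Longrightarrow> s (m a b) = s b"
  and r_mult [simp]: "a \<in> G \<Longrightarrow> b \<in> G \<Longrightarrow> s a = r b \<Longrightarrow> r (m a b) = r a"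
  using groupoid unfolding groupoid_def Let_def by blast+

lemma mult_assoc:
  "a \<in> G \<Longrightarrow> b \<in> G \<Longrightarrow> c \<in> G \<Longrightarrow> s a = r b \<Longrightarrow> s b = r c \<Longrightarrow> m (m a b) c = m a (m b c)"
  using groupoid unfolding groupoid_def Let_def by blast

lemma mult_r_left [simp]: "a \<in> G \<Longrightarrow> m (r a) a = a"
  and mult_s_right [simp]: "a \<in> G \<Longrightarrow> m a (s a) = a"
  and s_i [simp]: "a \<in> G \<Longrightarrow> s (i a) = r a"
  and r_i [simp]: "a \<in> G \<Longrightarrow> r (i a) = s a"
  and mult_i_right [simp]: "a \<in> G \<Longrightarrow> m a (i a) = r a"
  and mult_i_left [simp]: "a \<in> G \<Longrightarrow> m (i a) a = s a"
  using groupoid unfolding groupoid_def Let_def by blast+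

lemma units_iff: "x \<in> G0 \<longleftrightarrow> x \<in> G \<and> s x = x"
proof
  assume "x \<in> G0"
  then obtain a where "a \<in> G" "x = s a"
    unfolding units_def by blast
  then show "x \<in> G \<and> s x = x" by simp
next
  assume "x \<in> G \<and> s x = x"
  then show "x \<in> G0"
    unfolding units_def by (metis image_eqI)
qed

lemma units_iff_r: "x \<in> G0 \<longleftrightarrow> x \<in> G \<and> r x = x"
  using units_iff by (metis r_s s_r)

lemma units_subset: "G0 \<subseteq> G"
  using units_iff by blast

lemma s_in_units [simp]: "a \<in> G \<Longrightarrow> s a \<in> G0"
  and r_in_units [simp]: "a \<in> G \<Longrightarrow> r a \<in> G0"
  by (simp_all add: units_iff)

lemma mult_i_cancel_left:
  assumes "a \<in> G" "b \<in> G" "s a = r b"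
  shows "m (i a) (m a b) = b"
  using assms mult_assoc[of "i a" a b] by simp

lemma mult_i_cancel_right:
  assumes "a \<in> G" "y \<in> G" "r a = r y"
  shows "m a (m (i a) y) = y"
  using assms mult_assoc[of a "i a" y] by simp

lemma i_i [simp]:
  assumes "a \<in> G"
  shows "i (i a) = a"
proof -
  have "i (i a) = m (i (i a)) (s (i (i a)))"
    using assms mult_s_right[of "i (i a)"] by simp
  also have "s (i (i a)) = m (i a) a"
    using assms by simp
  also have "m (i (i a)) (m (i a) a) = a"
    using assms by (intro mult_i_cancel_left) simp_all
  finally show ?thesis .
qed

lemma mult_eq_unit_imp_i:
  assumes "a \<in> G" "b \<in> G" "s a = r b" "m a b \<in> G0"
  shows "b = i a"
proof -
  have "b = m (i a) (m a b)"
    using assms by (simp add: mult_i_cancel_left)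
  also have "m a b = r a"
    using assms units_iff_r by fastforce
  also have "m (i a) (r a) = i a"
    using assms mult_s_right[of "i a"] by simp
  finally show ?thesis .
qed

end

section \<open>Ample groupoids\<close>

lemma openin_bisection: "open_bisection T s r B \<Longrightarrow> openin T B"
  unfolding open_bisection_def by blast

lemma bisection_subset: "open_bisection T s r B \<Longrightarrow> B \<subseteq> topspace T"
  using openin_bisection openin_subset by blast

lemma inj_on_r_bisection:
  assumes "open_bisection T s r B"
  shows "inj_on r B"
proof -
  have "inj_on r (topspace (subtopology T B))"
    using assms homeomorphic_imp_injective_map unfolding open_bisection_def by blast
  then show ?thesis
    using bisection_subset[OF assms] by (simp add: Int_absorb1)
qed

lemma inj_on_s_bisection:
  assumes "open_bisection T s r B"
  shows "inj_on s B"
proof -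
  have "inj_on s (topspace (subtopology T B))"
    using assms homeomorphic_imp_injective_map unfolding open_bisection_def by blast
  then show ?thesis
    using bisection_subset[OF assms] by (simp add: Int_absorb1)
qed

locale ample_groupoid =
  fixes T :: "'g topology" and m :: "'g \<Rightarrow> 'g \<Rightarrow> 'g" and i s r :: "'g \<Rightarrow> 'g"
  assumes lch_top_groupoid: "lch_top_groupoid T m i s r"
    and ample: "ample T s r"

sublocale ample_groupoid \<subseteq> groupoid_on
  using lch_top_groupoid by unfold_locales (simp add: lch_top_groupoid_def)

context ample_groupoid
begin

lemma Hausdorff: "Hausdorff_space T"
  and continuous_mult:
    "continuous_map (subtopology (prod_topology T T) (composable T s r)) T (\<lambda>(a, b). m a b)"
  and continuous_i: "continuous_map T T i"
  and continuous_s: "continuous_map T T s"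
  and continuous_r: "continuous_map T T r"
  using lch_top_groupoid by (simp_all add: lch_top_groupoid_def)

lemma closedin_composable: "closedin (prod_topology T T) (composable T s r)"
proof -
  have "continuous_map (prod_topology T T) T (s \<circ> fst)" "continuous_map (prod_topology T T) T (r \<circ> snd)"
    using continuous_map_compose continuous_map_fst continuous_map_snd continuous_s continuous_r
    by blast+
  then have "closedin (prod_topology T T) {p \<in> topspace (prod_topology T T). (s \<circ> fst) p = (r \<circ> snd) p}"
    using closedin_continuous_maps_eq[OF Hausdorff] by blast
  moreover have "{p \<in> topspace (prod_topology T T). (s \<circ> fst) p = (r \<circ> snd) p} = composable T s r"
    unfolding composable_def by auto
  ultimately show ?thesis
    by simp
qed

lemma compact_open_bisection_nhd:
  "openin T U \<Longrightarrow> x \<in> U \<Longrightarrow> \<exists>B. open_bisection T s r B \<and> compactin T B \<and> x \<in> B \<and> B \<subseteq> U"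
  using ample unfolding ample_def by blast

lemma openin_units: "openin T G0"
proof (subst openin_subopen, intro ballI)
  fix u assume u: "u \<in> G0"
  then have "u \<in> G" "r u = u"
    using units_iff_r by auto
  then obtain B where B: "open_bisection T s r B" "u \<in> B"
    using compact_open_bisection_nhd[OF openin_topspace] by blast
  define D where "D = {b \<in> G. r b \<in> B} \<inter> B"
  have "openin T D"
    unfolding D_def
    by (intro openin_Int openin_continuous_map_preimage[OF continuous_r] openin_bisection[OF B(1)])
  moreover have "u \<in> D"
    using u B \<open>u \<in> G\<close> \<open>r u = u\<close> unfolding D_def by auto
  moreover have "D \<subseteq> G0"
  proof
    fix b assume b: "b \<in> D"
    then have "b \<in> G" "r b \<in> B" "b \<in> B"
      unfolding D_def by auto
    then have "r b = b"
      using inj_onD[OF inj_on_r_bisection[OF B(1)], of "r b" b] by simp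
    then show "b \<in> G0"
      using units_iff_r \<open>b \<in> G\<close> by blast
  qed
  ultimately show "\<exists>D. openin T D \<and> u \<in> D \<and> D \<subseteq> G0"
    by blast
qed

lemma closedin_units: "closedin T G0"
proof -
  have "closedin T {x \<in> G. s x = id x}"
    by (rule closedin_continuous_maps_eq[OF Hausdorff continuous_s continuous_map_id])
  moreover have "{x \<in> G. s x = id x} = G0"
    using units_iff by auto
  ultimately show ?thesis
    by simp
qed

lemma openin_r_image:
  assumes "open_bisection T s r B" "openin T D" "D \<subseteq> B"
  shows "openin T (r ` D)"
proof (rule openin_homeomorphic_image[OF _ _ assms(2,3)])
  show "homeomorphic_map (subtopology T B) (subtopology T (r ` B)) r"
    using assms(1) unfolding open_bisection_def by blast
  show "openin T (r ` B)"
    using assms(1) openin_units openin_trans_full unfolding open_bisection_def by blast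
qed

lemma bisection_inverse_eq:
  assumes B: "open_bisection T s r B" and "a \<in> B" "b \<in> G" "i b \<in> B" "s a = r b"
  shows "b = i a"
proof -
  have "s (i b) = s a"
    using assms(3,5) by simp
  then have "i b = a"
    using inj_onD[OF inj_on_s_bisection[OF B]] assms(2,4) by blast
  then show ?thesis
    using assms(3) by force
qed

lemma compact_bisection_coverE:
  assumes K: "compactin T K" and U: "openin T U" "K \<subseteq> U"
  obtains \<F> where "finite \<F>" "\<And>B. B \<in> \<F> \<Longrightarrow> open_bisection T s r B \<and> B \<subseteq> U" "K \<subseteq> \<Union>\<F>"
proof -
  let ?\<U> = "{B. open_bisection T s r B \<and> B \<subseteq> U}"
  have cover: "K \<subseteq> \<Union>?\<U>"
  proof
    fix x assume "x \<in> K"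
    then obtain B where "open_bisection T s r B" "x \<in> B" "B \<subseteq> U"
      using compact_open_bisection_nhd[OF U(1)] U(2) by blast
    then show "x \<in> \<Union>?\<U>"
      by blast
  qed
  have "\<And>B. B \<in> ?\<U> \<Longrightarrow> openin T B"
    using openin_bisection by blast
  then obtain \<F> where "finite \<F>" "\<F> \<subseteq> ?\<U>" "K \<subseteq> \<Union>\<F>"
    using compactinD[OF K _ cover] by blast
  then show thesis
    by (intro that[of \<F>]) auto
qed

lemma finite_r_fibre:
  assumes K: "compactin T K"
  shows "finite {a \<in> K. r a = x}"
proof -
  obtain \<F> where \<F>: "finite \<F>" "\<And>B. B \<in> \<F> \<Longrightarrow> open_bisection T s r B \<and> B \<subseteq> G" "K \<subseteq> \<Union>\<F>"
    using compact_bisection_coverE[OF K openin_topspace compactin_subset_topspace[OF K]] by blast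
  have "{a \<in> K. r a = x} \<subseteq> (\<Union>B\<in>\<F>. r -` {x} \<inter> B)"
    using \<F>(3) by blast
  moreover have "finite (\<Union>B\<in>\<F>. r -` {x} \<inter> B)"
    using \<F>(1,2) inj_on_r_bisection by (blast intro: finite_vimage_IntI)
  ultimately show ?thesis
    using finite_subset by blast
qed

lemma bisection_sectionE:
  assumes B: "open_bisection T s r B"
  obtains q where "continuous_map (subtopology T (r ` B)) T q"
    and "\<And>x. x \<in> r ` B \<Longrightarrow> q x \<in> B \<and> r (q x) = x"
proof -
  have "homeomorphic_map (subtopology T B) (subtopology T (r ` B)) r"
    using B unfolding open_bisection_def by blast
  then obtain q where "homeomorphic_maps (subtopology T B) (subtopology T (r ` B)) r q"
    using homeomorphic_map_maps by blast
  then have q: "continuous_map (subtopology T (r ` B)) (subtopology T B) q"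
    and rq: "\<forall>y \<in> topspace (subtopology T (r ` B)). r (q y) = y"
    unfolding homeomorphic_maps_def by blast+
  have rB: "r ` B \<subseteq> G"
    using bisection_subset[OF B] by auto
  show thesis
  proof
    show "continuous_map (subtopology T (r ` B)) T q"
      using continuous_map_into_fulltopology[OF q] .
    fix x assume x: "x \<in> r ` B"
    then have "x \<in> topspace (subtopology T (r ` B))"
      using rB by auto
    then show "q x \<in> B \<and> r (q x) = x"
      using continuous_map_image_subset_topspace[OF q] rq by auto
  qed
qed

lemma continuous_map_bisection_factorisation:
  assumes B: "open_bisection T s r B"
    and q: "continuous_map (subtopology T (r ` B)) T q" "\<And>x. x \<in> r ` B \<Longrightarrow> q x \<in> B \<and> r (q x) = x"
  shows "continuous_map (subtopology T {y \<in> G. r y \<in> r ` B}) (prod_topology T T)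
    (\<lambda>y. (q (r y), m (i (q (r y))) y))"
proof -
  let ?X = "subtopology T {y \<in> G. r y \<in> r ` B}"
  have "continuous_map ?X (subtopology T (r ` B)) r"
    by (intro continuous_map_into_subtopology continuous_map_from_subtopology continuous_r) auto
  then have lift: "continuous_map ?X T (\<lambda>y. q (r y))"
    using continuous_map_compose[OF _ q(1)] by (simp add: o_def)
  have "(i (q (r y)), y) \<in> composable T s r" if "y \<in> topspace ?X" for y
  proof -
    have y: "y \<in> G" "r y \<in> r ` B"
      using that by auto
    then have "q (r y) \<in> G" "r (q (r y)) = r y"
      using q(2) bisection_subset[OF B] by auto
    with y show ?thesis
      by (simp add: composable_def)
  qed
  moreover have "continuous_map ?X (prod_topology T T) (\<lambda>y. (i (q (r y)), y))"
    by (intro continuous_map_pairedI continuous_map_compose[OF lift continuous_i, unfolded o_def]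
        continuous_map_from_subtopology continuous_map_id[unfolded id_def])
  ultimately have "continuous_map ?X (subtopology (prod_topology T T) (composable T s r))
      (\<lambda>y. (i (q (r y)), y))"
    by (blast intro: continuous_map_into_subtopology)
  then have "continuous_map ?X T ((\<lambda>(a, b). m a b) \<circ> (\<lambda>y. (i (q (r y)), y)))"
    by (rule continuous_map_compose[OF _ continuous_mult])
  then have "continuous_map ?X T (\<lambda>y. m (i (q (r y))) y)"
    by (simp add: o_def)
  then show ?thesis
    by (intro continuous_map_pairedI lift)
qed

(* The factorisation y = x (x\<inverse> y) with x in B depends continuously on y near \<gamma>. *)
lemma bisection_factorisation_nhdE:
  assumes B: "open_bisection T s r B" "a \<in> B" and \<gamma>: "\<gamma> \<in> G" "r a = r \<gamma>"
    and W: "openin (prod_topology T T) W" "(a, m (i a) \<gamma>) \<in> W"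
  obtains N where "openin T N" "\<gamma> \<in> N"
    and "\<And>y. y \<in> N \<Longrightarrow> y \<in> G \<and> (\<exists>x\<in>B. r x = r y \<and> (x, m (i x) y) \<in> W)"
proof -
  obtain q where q: "continuous_map (subtopology T (r ` B)) T q"
    and qB: "\<And>x. x \<in> r ` B \<Longrightarrow> q x \<in> B \<and> r (q x) = x"
    using bisection_sectionE[OF B(1)] by blast
  define X where "X = {y \<in> G. r y \<in> r ` B}"
  have X: "openin T X"
    unfolding X_def
    by (intro openin_continuous_map_preimage[OF continuous_r] openin_r_image[OF B(1)]
        openin_bisection[OF B(1)] order_refl)
  define N where "N = {y \<in> topspace (subtopology T X). (q (r y), m (i (q (r y))) y) \<in> W}"
  show thesis
  proof
    show "openin T N"
      using openin_trans_full[OF openin_continuous_map_preimage[OF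
          continuous_map_bisection_factorisation[OF B(1) q qB] W(1)]] X
      unfolding N_def X_def by blast
    have "r \<gamma> \<in> r ` B"
      using \<gamma>(2) B(2) by (metis image_eqI)
    then have "q (r \<gamma>) \<in> B" "r (q (r \<gamma>)) = r a"
      using qB \<gamma>(2) by auto
    then have "q (r \<gamma>) = a"
      using inj_onD[OF inj_on_r_bisection[OF B(1)]] B(2) by blast
    then show "\<gamma> \<in> N"
      using \<gamma> W(2) \<open>r \<gamma> \<in> r ` B\<close> unfolding N_def X_def by auto
    fix y assume "y \<in> N"
    then show "y \<in> G \<and> (\<exists>x\<in>B. r x = r y \<and> (x, m (i x) y) \<in> W)"
      using qB unfolding N_def X_def by auto
  qed
qed

lemma bisection_avoid_near_non_loop:
  assumes D: "open_bisection T s r D" and d: "d \<in> D" "r d \<in> V" "s d \<noteq> r d" and V: "openin T V"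
  obtains V' where "openin T V'" "V' \<noteq> {}" "V' \<subseteq> V" "\<And>e. e \<in> D \<Longrightarrow> \<not> (r e \<in> V' \<and> s e \<in> V')"
proof -
  have "d \<in> G"
    using bisection_subset[OF D] d(1) by blast
  then obtain P Q where PQ: "openin T P" "openin T Q" "r d \<in> P" "s d \<in> Q" "disjnt P Q"
    using Hausdorff d(3) unfolding Hausdorff_space_def by (metis r_in_G s_in_G)
  define D' where "D' = D \<inter> {y \<in> G. r y \<in> P \<inter> V} \<inter> {y \<in> G. s y \<in> Q}"
  have "openin T D'"
    unfolding D'_def
    by (intro openin_Int openin_bisection[OF D]
        openin_continuous_map_preimage[OF continuous_r openin_Int[OF PQ(1) V]]
        openin_continuous_map_preimage[OF continuous_s PQ(2)])
  then have "openin T (r ` D')"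
    using openin_r_image[OF D] unfolding D'_def by blast
  moreover have "d \<in> D'"
    unfolding D'_def using d \<open>d \<in> G\<close> PQ(3,4) by simp
  then have "r ` D' \<noteq> {}"
    by blast
  moreover have "r ` D' \<subseteq> V"
    unfolding D'_def by blast
  moreover have "\<not> (r e \<in> r ` D' \<and> s e \<in> r ` D')" if e: "e \<in> D" for e
  proof
    assume "r e \<in> r ` D' \<and> s e \<in> r ` D'"
    then obtain y z where yz: "y \<in> D'" "r e = r y" "z \<in> D'" "s e = r z"
      by blast
    then have "e = y"
      using inj_onD[OF inj_on_r_bisection[OF D]] e unfolding D'_def by blast
    then have "s e \<in> Q" "s e \<in> P"
      using yz unfolding D'_def by auto
    then show False
      using PQ(5) unfolding disjnt_def by blast
  qed
  ultimately show thesis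
    using that by blast
qed

lemma effective_avoid_bisection:
  assumes eff: "effective T s r" and D: "open_bisection T s r D" "D \<inter> G0 = {}"
    and V: "openin T V" "V \<subseteq> G0" "V \<noteq> {}"
  obtains V' where "openin T V'" "V' \<noteq> {}" "V' \<subseteq> V" "\<And>d. d \<in> D \<Longrightarrow> \<not> (r d \<in> V' \<and> s d \<in> V')"
proof (cases "\<forall>d\<in>D. r d \<in> V \<longrightarrow> s d = r d")
  case True
  define E where "E = D \<inter> {y \<in> G. r y \<in> V}"
  have "openin T E"
    unfolding E_def
    by (intro openin_Int openin_bisection[OF D(1)] openin_continuous_map_preimage[OF continuous_r V(1)])
  moreover have "E \<subseteq> isotropy T s r"
    unfolding E_def isotropy_def using True by auto
  ultimately have "E \<subseteq> G0"
    using eff interior_of_maximal unfolding effective_def by blast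
  then have "E = {}"
    using D(2) unfolding E_def by blast
  then have "\<not> (r d \<in> V \<and> s d \<in> V)" if "d \<in> D" for d
    using that bisection_subset[OF D(1)] unfolding E_def by blast
  with V that show thesis
    by blast
next
  case False
  then obtain d where d: "d \<in> D" "r d \<in> V" "s d \<noteq> r d"
    by blast
  show thesis
    by (rule bisection_avoid_near_non_loop[OF D(1) d V(1)]) (rule that)
qed

lemma effective_avoid_bisections:
  assumes eff: "effective T s r" and "finite \<F>"
    and \<F>: "\<And>D. D \<in> \<F> \<Longrightarrow> open_bisection T s r D \<and> D \<inter> G0 = {}"
    and V: "openin T V" "V \<subseteq> G0" "V \<noteq> {}"
  shows "\<exists>V'. openin T V' \<and> V' \<noteq> {} \<and> V' \<subseteq> V \<and> (\<forall>D\<in>\<F>. \<forall>d\<in>D. \<not> (r d \<in> V' \<and> s d \<in> V'))"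
  using \<open>finite \<F>\<close> \<F>
proof (induction \<F> rule: finite_induct)
  case empty
  then show ?case
    using V by blast
next
  case (insert D \<F>)
  then have D: "open_bisection T s r D" "D \<inter> G0 = {}"
    by auto
  have "\<And>D'. D' \<in> \<F> \<Longrightarrow> open_bisection T s r D' \<and> D' \<inter> G0 = {}"
    using insert.prems by blast
  then obtain V1 where V1: "openin T V1" "V1 \<noteq> {}" "V1 \<subseteq> V"
    "\<forall>D\<in>\<F>. \<forall>d\<in>D. \<not> (r d \<in> V1 \<and> s d \<in> V1)"
    using insert.IH by blast
  have "V1 \<subseteq> G0"
    using V1(3) V(2) by blast
  then obtain V2 where "openin T V2" "V2 \<noteq> {}" "V2 \<subseteq> V1"
    "\<And>d. d \<in> D \<Longrightarrow> \<not> (r d \<in> V2 \<and> s d \<in> V2)"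
    using effective_avoid_bisection[OF eff D V1(1) _ V1(2)] by blast
  with V1 show ?case
    by blast
qed

lemma effective_avoid_compact:
  assumes eff: "effective T s r" and K: "compactin T K" "K \<inter> G0 = {}"
    and V: "openin T V" "V \<subseteq> G0" "V \<noteq> {}"
  obtains V' where "openin T V'" "V' \<noteq> {}" "V' \<subseteq> V" "\<And>\<gamma>. \<gamma> \<in> K \<Longrightarrow> \<not> (r \<gamma> \<in> V' \<and> s \<gamma> \<in> V')"
proof -
  have "openin T (G - G0)"
    using closedin_units by (simp add: closedin_def)
  moreover have "K \<subseteq> G - G0"
    using K compactin_subset_topspace[OF K(1)] by blast
  ultimately obtain \<F> where \<F>: "finite \<F>" "\<And>D. D \<in> \<F> \<Longrightarrow> open_bisection T s r D \<and> D \<subseteq> G - G0"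
    "K \<subseteq> \<Union>\<F>"
    using compact_bisection_coverE[OF K(1)] by blast
  then have "\<And>D. D \<in> \<F> \<Longrightarrow> open_bisection T s r D \<and> D \<inter> G0 = {}"
    by blast
  then obtain V' where V': "openin T V'" "V' \<noteq> {}" "V' \<subseteq> V"
    "\<forall>D\<in>\<F>. \<forall>d\<in>D. \<not> (r d \<in> V' \<and> s d \<in> V')"
    using effective_avoid_bisections[OF eff \<F>(1) _ V] by blast
  show thesis
  proof (rule that[OF V'(1-3)])
    show "\<not> (r \<gamma> \<in> V' \<and> s \<gamma> \<in> V')" if "\<gamma> \<in> K" for \<gamma>
      using that \<F>(3) V'(4) by blast
  qed
qed

end

section \<open>Twisted convolution\<close>

locale twisted_ample_groupoid = ample_groupoid T m i s r
  for T :: "'g topology" and m i s r +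
  fixes \<sigma> :: "'g \<times> 'g \<Rightarrow> 'k::field"
  assumes cocycle: "cocycle T m s r \<sigma>"
begin

abbreviation twisted_conv :: "('g \<Rightarrow> 'k) \<Rightarrow> ('g \<Rightarrow> 'k) \<Rightarrow> 'g \<Rightarrow> 'k" (infixl "\<star>" 70)
  where "f \<star> h \<equiv> conv T m s r \<sigma> f h"

lemma sigma_nonzero: "a \<in> G \<Longrightarrow> b \<in> G \<Longrightarrow> s a = r b \<Longrightarrow> \<sigma> (a, b) \<noteq> 0"
  using cocycle unfolding cocycle_def composable_def by blast

lemma sigma_locally_constant:
  "p \<in> composable T s r \<Longrightarrow>
    \<exists>W. openin (prod_topology T T) W \<and> p \<in> W \<and> (\<forall>q\<in>W \<inter> composable T s r. \<sigma> q = \<sigma> p)"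
  using cocycle unfolding cocycle_def by blast

lemma sigma_r_left [simp]: "g \<in> G \<Longrightarrow> \<sigma> (r g, g) = 1"
  and sigma_s_right [simp]: "g \<in> G \<Longrightarrow> \<sigma> (g, s g) = 1"
  using cocycle unfolding cocycle_def by blast+

lemma conv_outside:
  assumes "\<gamma> \<notin> G"
  shows "(f \<star> h) \<gamma> = 0"
proof -
  have S: "{(a, b). (a, b) \<in> composable T s r \<and> m a b = \<gamma> \<and> f a \<noteq> 0 \<and> h b \<noteq> 0} = {}"
    using assms by (auto simp: composable_def)
  show ?thesis
    unfolding conv_def S by simp
qed

lemma conv_nonzeroE:
  assumes "(f \<star> h) \<gamma> \<noteq> 0"
  obtains a b where "a \<in> G" "b \<in> G" "s a = r b" "m a b = \<gamma>" "f a \<noteq> 0" "h b \<noteq> 0"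
proof -
  have "{(a, b). (a, b) \<in> composable T s r \<and> m a b = \<gamma> \<and> f a \<noteq> 0 \<and> h b \<noteq> 0} \<noteq> {}"
  proof
    assume S: "{(a, b). (a, b) \<in> composable T s r \<and> m a b = \<gamma> \<and> f a \<noteq> 0 \<and> h b \<noteq> 0} = {}"
    have "(f \<star> h) \<gamma> = 0"
      unfolding conv_def S by simp
    with assms show False ..
  qed
  then show thesis
    using that unfolding composable_def by blast
qed

lemma conv_eq_single:
  assumes ab: "a0 \<in> G" "b0 \<in> G" "s a0 = r b0" "m a0 b0 = \<gamma>"
    and unique: "\<And>a b. a \<in> G \<Longrightarrow> b \<in> G \<Longrightarrow> s a = r b \<Longrightarrow> m a b = \<gamma> \<Longrightarrow> f a \<noteq> 0 \<Longrightarrow> h b \<noteq> 0 \<Longrightarrow>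
      a = a0 \<and> b = b0"
  shows "(f \<star> h) \<gamma> = \<sigma> (a0, b0) * f a0 * h b0"
proof -
  let ?S = "{(a, b). (a, b) \<in> composable T s r \<and> m a b = \<gamma> \<and> f a \<noteq> 0 \<and> h b \<noteq> 0}"
  have "?S \<subseteq> {(a0, b0)}"
    using unique unfolding composable_def by blast
  moreover have "(a0, b0) \<in> ?S" if "f a0 \<noteq> 0" "h b0 \<noteq> 0"
    using ab that unfolding composable_def by blast
  ultimately have S: "?S = (if f a0 \<noteq> 0 \<and> h b0 \<noteq> 0 then {(a0, b0)} else {})"
    by auto
  show ?thesis
    unfolding conv_def S by auto
qed

lemma conv_eq_sum_fibre:
  assumes y: "y \<in> G" and F: "finite F" "F \<subseteq> {x \<in> G. r x = r y}"
    and supp: "\<And>x. x \<in> G \<Longrightarrow> r x = r y \<Longrightarrow> f x \<noteq> 0 \<Longrightarrow> x \<in> F"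
  shows "(f \<star> h) y = (\<Sum>x\<in>F. \<sigma> (x, m (i x) y) * f x * h (m (i x) y))"
proof -
  let ?S = "{(a, b). (a, b) \<in> composable T s r \<and> m a b = y \<and> f a \<noteq> 0 \<and> h b \<noteq> 0}"
  let ?F = "{x \<in> F. f x \<noteq> 0 \<and> h (m (i x) y) \<noteq> 0}"
  have "?S = (\<lambda>x. (x, m (i x) y)) ` ?F"
  proof (intro set_eqI iffI)
    fix p assume "p \<in> ?S"
    then obtain a b where p: "p = (a, b)" "a \<in> G" "b \<in> G" "s a = r b" "m a b = y" "f a \<noteq> 0" "h b \<noteq> 0"
      unfolding composable_def by blast
    then have "r a = r y" "b = m (i a) y"
      using mult_i_cancel_left by auto
    with p supp show "p \<in> (\<lambda>x. (x, m (i x) y)) ` ?F"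
      by auto
  next
    fix p assume "p \<in> (\<lambda>x. (x, m (i x) y)) ` ?F"
    then obtain x where x: "x \<in> F" "f x \<noteq> 0" "h (m (i x) y) \<noteq> 0" "p = (x, m (i x) y)"
      by blast
    then have "x \<in> G" "r x = r y"
      using F(2) by auto
    with x y show "p \<in> ?S"
      by (auto simp: composable_def mult_i_cancel_right)
  qed
  moreover have "inj_on (\<lambda>x. (x, m (i x) y)) ?F"
    by (rule inj_onI) simp
  ultimately have "(f \<star> h) y = (\<Sum>x\<in>?F. \<sigma> (x, m (i x) y) * f x * h (m (i x) y))"
    by (simp add: conv_def sum.reindex)
  also have "\<dots> = (\<Sum>x\<in>F. \<sigma> (x, m (i x) y) * f x * h (m (i x) y))"
    using F(1) by (intro sum.mono_neutral_left) auto
  finally show ?thesis .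
qed

lemma conv_scaled_indicator_units_left:
  assumes V: "V \<subseteq> G0" and g: "g \<in> steinberg T"
  shows "((\<lambda>x. c * indicator V x) \<star> g) \<gamma> = (if r \<gamma> \<in> V then c * g \<gamma> else 0)"
proof (cases "\<gamma> \<in> G")
  case True
  have "((\<lambda>x. c * indicator V x) \<star> g) \<gamma> = \<sigma> (r \<gamma>, \<gamma>) * (c * indicator V (r \<gamma>)) * g \<gamma>"
  proof (rule conv_eq_single)
    fix a b assume ab: "a \<in> G" "b \<in> G" "s a = r b" "m a b = \<gamma>" "c * indicator V a \<noteq> 0"
    then have "s a = a"
      using V units_iff by (auto simp: indicator_def split: if_splits)
    with ab show "a = r \<gamma> \<and> b = \<gamma>"
      by (metis mult_r_left r_mult)
  qed (use True in simp_all)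
  with True show ?thesis
    by (simp add: indicator_def)
qed (simp add: conv_outside steinberg_vanishes[OF g])

lemma conv_indicator_units_left:
  "V \<subseteq> G0 \<Longrightarrow> g \<in> steinberg T \<Longrightarrow> (indicator V \<star> g) \<gamma> = (if r \<gamma> \<in> V then g \<gamma> else 0)"
  using conv_scaled_indicator_units_left[where c = 1] by simp

lemma conv_indicator_units_right:
  assumes V: "V \<subseteq> G0" and g: "g \<in> steinberg T"
  shows "(g \<star> indicator V) \<gamma> = (if s \<gamma> \<in> V then g \<gamma> else 0)"
proof (cases "\<gamma> \<in> G")
  case True
  have "(g \<star> indicator V) \<gamma> = \<sigma> (\<gamma>, s \<gamma>) * g \<gamma> * indicator V (s \<gamma>)"
  proof (rule conv_eq_single)
    fix a b assume ab: "a \<in> G" "b \<in> G" "s a = r b" "m a b = \<gamma>" "indicator V b \<noteq> (0::'k)"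
    then have "r b = b"
      using V units_iff_r by (auto simp: indicator_def split: if_splits)
    with ab show "a = \<gamma> \<and> b = s \<gamma>"
      by (metis mult_s_right s_mult)
  qed (use True in simp_all)
  with True show ?thesis
    by (simp add: indicator_def)
qed (simp add: conv_outside steinberg_vanishes[OF g])

lemma conv_indicator_at_range:
  assumes B: "open_bisection T s r B" and \<gamma>: "\<gamma> \<in> G" "i \<gamma> \<in> B"
  shows "(f \<star> indicator B) (r \<gamma>) = \<sigma> (\<gamma>, i \<gamma>) * f \<gamma>"
proof -
  have "(f \<star> indicator B) (r \<gamma>) = \<sigma> (\<gamma>, i \<gamma>) * f \<gamma> * indicator B (i \<gamma>)"
  proof (rule conv_eq_single)
    fix a b assume ab: "a \<in> G" "b \<in> G" "s a = r b" "m a b = r \<gamma>" "indicator B b \<noteq> (0::'k)"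
    then have "b = i a"
      using \<gamma>(1) by (intro mult_eq_unit_imp_i) auto
    have "r a = r (m a b)"
      using ab(1-3) by simp
    then have "r a = r \<gamma>"
      using ab(4) \<gamma>(1) by simp
    have "b \<in> B"
      using ab(5) by (simp add: indicator_def split: if_splits)
    moreover have "s b = s (i \<gamma>)"
      using \<open>b = i a\<close> \<open>r a = r \<gamma>\<close> ab(1) \<gamma>(1) by simp
    ultimately have "b = i \<gamma>"
      using inj_onD[OF inj_on_s_bisection[OF B]] \<gamma>(2) by blast
    moreover have "a = i b"
      using \<open>b = i a\<close> ab(1) by simp
    ultimately show "a = \<gamma> \<and> b = i \<gamma>"
      using \<gamma>(1) by simp
  qed (use \<gamma> in simp_all)
  with \<gamma>(2) show ?thesis
    by simp
qed

lemma sigma_inverse_pair_locally_constant: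
  assumes x: "x \<in> G"
  obtains W where "openin T W" "x \<in> W" "\<And>y. y \<in> W \<Longrightarrow> y \<in> G \<and> \<sigma> (i y, y) = \<sigma> (i x, x)"
proof -
  have "(i x, x) \<in> composable T s r"
    using x by (simp add: composable_def)
  then obtain W where W: "openin (prod_topology T T) W" "(i x, x) \<in> W"
    and \<sigma>W: "\<forall>q\<in>W \<inter> composable T s r. \<sigma> q = \<sigma> (i x, x)"
    using sigma_locally_constant by blast
  have pair: "continuous_map T (prod_topology T T) (\<lambda>y. (i y, y))"
    by (intro continuous_map_pairedI continuous_i continuous_map_id[unfolded id_def])
  show thesis
  proof (rule that)
    show "openin T {y \<in> G. (i y, y) \<in> W}"
      using openin_continuous_map_preimage[OF pair W(1)] by simp
    show "x \<in> {y \<in> G. (i y, y) \<in> W}"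
      using x W(2) by simp
    fix y assume y: "y \<in> {y \<in> G. (i y, y) \<in> W}"
    then have "(i y, y) \<in> W \<inter> composable T s r"
      by (simp add: composable_def)
    with y \<sigma>W show "y \<in> G \<and> \<sigma> (i y, y) = \<sigma> (i x, x)"
      by blast
  qed
qed

definition bisection_adjoint :: "'g set \<Rightarrow> 'g \<Rightarrow> 'k"
  where "bisection_adjoint B b = (if b \<in> G \<and> i b \<in> B then inverse (\<sigma> (i b, b)) else 0)"

lemma bisection_adjoint_in_steinberg:
  assumes B: "open_bisection T s r B" "compactin T B"
  shows "bisection_adjoint B \<in> steinberg T"
proof (rule steinbergI[where K = "i ` B"])
  show "compactin T (i ` B)"
    using image_compactin[OF B(2) continuous_i] .
  show "bisection_adjoint B x = 0" if "x \<notin> i ` B" for x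
    using that unfolding bisection_adjoint_def by (metis i_i image_eqI)
  fix x assume x: "x \<in> G"
  show "\<exists>W. openin T W \<and> x \<in> W \<and> (\<forall>y\<in>W. bisection_adjoint B y = bisection_adjoint B x)"
  proof (cases "i x \<in> B")
    case True
    obtain W where W: "openin T W" "x \<in> W" "\<And>y. y \<in> W \<Longrightarrow> y \<in> G \<and> \<sigma> (i y, y) = \<sigma> (i x, x)"
      using sigma_inverse_pair_locally_constant[OF x] by blast
    have "openin T ({y \<in> G. i y \<in> B} \<inter> W)"
      by (intro openin_Int openin_continuous_map_preimage[OF continuous_i openin_bisection[OF B(1)]] W(1))
    moreover have "bisection_adjoint B y = bisection_adjoint B x" if "y \<in> {y \<in> G. i y \<in> B} \<inter> W" for y
      using that W(3)[of y] x True unfolding bisection_adjoint_def by simp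
    ultimately show ?thesis
      using x True W(2) by blast
  next
    case False
    have "openin T (G - B)"
      using compactin_imp_closedin[OF Hausdorff B(2)] by (simp add: closedin_def)
    then have "openin T {y \<in> G. i y \<in> G - B}"
      by (rule openin_continuous_map_preimage[OF continuous_i])
    moreover have "x \<in> {y \<in> G. i y \<in> G - B}"
      using x False by simp
    moreover have "bisection_adjoint B y = bisection_adjoint B x" if "y \<in> {y \<in> G. i y \<in> G - B}" for y
      using that False unfolding bisection_adjoint_def by simp
    ultimately show ?thesis
      by blast
  qed
qed (simp add: bisection_adjoint_def)

lemma conv_indicator_bisection_adjoint:
  assumes B: "open_bisection T s r B"
  shows "indicator B \<star> bisection_adjoint B = indicator (r ` B)"
proof
  fix \<gamma>
  have factors: "a \<in> B \<and> b = i a"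
    if "a \<in> G" "b \<in> G" "s a = r b" "indicator B a \<noteq> (0::'k)" "bisection_adjoint B b \<noteq> 0" for a b
  proof -
    have "a \<in> B" "i b \<in> B"
      using that unfolding bisection_adjoint_def by (auto simp: indicator_def split: if_splits)
    with that show ?thesis
      using bisection_inverse_eq[OF B] by blast
  qed
  show "(indicator B \<star> bisection_adjoint B) \<gamma> = indicator (r ` B) \<gamma>"
  proof (cases "\<gamma> \<in> r ` B")
    case True
    then obtain a where a: "a \<in> B" "r a = \<gamma>"
      by blast
    then have aG: "a \<in> G"
      using bisection_subset[OF B] by blast
    have "(indicator B \<star> bisection_adjoint B) \<gamma> = \<sigma> (a, i a) * indicator B a * bisection_adjoint B (i a)"
    proof (rule conv_eq_single)
      fix a' b assume ab: "a' \<in> G" "b \<in> G" "s a' = r b" "m a' b = \<gamma>"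
        and "indicator B a' \<noteq> (0::'k)" "bisection_adjoint B b \<noteq> 0"
      then have "a' \<in> B" "b = i a'"
        using factors by blast+
      moreover have "r a' = r a"
        using ab a(2) aG \<open>b = i a'\<close> by simp
      ultimately show "a' = a \<and> b = i a"
        using inj_onD[OF inj_on_r_bisection[OF B]] a(1) by blast
    qed (use a aG in simp_all)
    also have "\<dots> = 1"
      using a aG sigma_nonzero[of a "i a"] by (simp add: bisection_adjoint_def)
    finally show ?thesis
      using True by simp
  next
    case False
    have "(indicator B \<star> bisection_adjoint B) \<gamma> = 0"
    proof (rule ccontr)
      assume "(indicator B \<star> bisection_adjoint B) \<gamma> \<noteq> 0"
      then obtain a b where ab: "a \<in> G" "b \<in> G" "s a = r b" "m a b = \<gamma>"
        and nz: "indicator B a \<noteq> (0::'k)" "bisection_adjoint B b \<noteq> 0"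
        by (rule conv_nonzeroE)
      have "a \<in> B" "b = i a"
        using factors[OF ab(1-3) nz] by auto
      then have "\<gamma> = r a"
        using ab(1,4) by simp
      with \<open>a \<in> B\<close> False show False
        by (metis rev_image_eqI)
    qed
    with False show ?thesis
      by simp
  qed
qed

lemma conv_term_locally_constantE:
  assumes h: "h \<in> steinberg T" and ab: "(a, b) \<in> composable T s r"
  obtains W where "openin (prod_topology T T) W" "(a, b) \<in> W"
    and "\<And>x c. (x, c) \<in> W \<Longrightarrow> (x, c) \<in> composable T s r \<Longrightarrow> h c = h b \<and> \<sigma> (x, c) = \<sigma> (a, b)"
proof -
  have "b \<in> G"
    using ab by (simp add: composable_def)
  then obtain Wh where Wh: "openin T Wh" "b \<in> Wh" "\<forall>y\<in>Wh. h y = h b"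
    using steinberg_locally_constant[OF h] by blast
  obtain Ws where Ws: "openin (prod_topology T T) Ws" "(a, b) \<in> Ws"
    "\<forall>q\<in>Ws \<inter> composable T s r. \<sigma> q = \<sigma> (a, b)"
    using sigma_locally_constant[OF ab] by blast
  show thesis
  proof (rule that)
    show "openin (prod_topology T T) (Ws \<inter> G \<times> Wh)"
      using Ws(1) Wh(1) by (simp add: openin_Int openin_prod_Times_iff)
    show "(a, b) \<in> Ws \<inter> G \<times> Wh"
      using Ws(2) Wh(2) ab by (simp add: composable_def)
    show "h c = h b \<and> \<sigma> (x, c) = \<sigma> (a, b)"
      if "(x, c) \<in> Ws \<inter> G \<times> Wh" "(x, c) \<in> composable T s r" for x c
      using that Wh(3) Ws(3) by blast
  qed
qed

lemma conv_branch_nhdE: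
  assumes f: "f \<in> steinberg T" and h: "h \<in> steinberg T"
    and a: "a \<in> G" "r a = r \<gamma>" and \<gamma>: "\<gamma> \<in> G" and P: "openin T P" "a \<in> P"
  obtains B N where "open_bisection T s r B" "a \<in> B" "B \<subseteq> P" "\<And>x. x \<in> B \<Longrightarrow> f x = f a"
    and "openin T N" "\<gamma> \<in> N"
    and "\<And>y. y \<in> N \<Longrightarrow> y \<in> G \<and> (\<exists>x\<in>B. r x = r y \<and>
      h (m (i x) y) = h (m (i a) \<gamma>) \<and> \<sigma> (x, m (i x) y) = \<sigma> (a, m (i a) \<gamma>))"
proof -
  obtain Wf where Wf: "openin T Wf" "a \<in> Wf" "\<forall>y\<in>Wf. f y = f a"
    using steinberg_locally_constant[OF f a(1)] by blast
  obtain B where B: "open_bisection T s r B" "a \<in> B" "B \<subseteq> P \<inter> Wf"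
    using compact_open_bisection_nhd[OF openin_Int[OF P(1) Wf(1)]] P(2) Wf(2) by blast
  have "(a, m (i a) \<gamma>) \<in> composable T s r"
    using a \<gamma> by (simp add: composable_def)
  then obtain W where W: "openin (prod_topology T T) W" "(a, m (i a) \<gamma>) \<in> W"
    and const: "\<And>x c. (x, c) \<in> W \<Longrightarrow> (x, c) \<in> composable T s r \<Longrightarrow>
      h c = h (m (i a) \<gamma>) \<and> \<sigma> (x, c) = \<sigma> (a, m (i a) \<gamma>)"
    using conv_term_locally_constantE[OF h] by blast
  obtain N where N: "openin T N" "\<gamma> \<in> N"
    and NB: "\<And>y. y \<in> N \<Longrightarrow> y \<in> G \<and> (\<exists>x\<in>B. r x = r y \<and> (x, m (i x) y) \<in> W)"
    using bisection_factorisation_nhdE[OF B(1,2) \<gamma> a(2) W] by blast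
  show thesis
  proof (rule that[OF B(1,2) _ _ N])
    show "B \<subseteq> P" "\<And>x. x \<in> B \<Longrightarrow> f x = f a"
      using B(3) Wf(3) by auto
    fix y assume "y \<in> N"
    then obtain x where x: "x \<in> B" "r x = r y" "(x, m (i x) y) \<in> W" and y: "y \<in> G"
      using NB by blast
    moreover have "x \<in> G"
      using x(1) bisection_subset[OF B(1)] by blast
    ultimately have "(x, m (i x) y) \<in> composable T s r"
      by (simp add: composable_def)
    with x y const show "y \<in> G \<and> (\<exists>x\<in>B. r x = r y \<and>
        h (m (i x) y) = h (m (i a) \<gamma>) \<and> \<sigma> (x, m (i x) y) = \<sigma> (a, m (i a) \<gamma>))"
      by blast
  qed
qed

lemma conv_eq_sum_branches:
  assumes y: "y \<in> G" and A: "finite A"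
    and B: "\<And>a. a \<in> A \<Longrightarrow> open_bisection T s r (B a)"
    and disj: "\<And>a b. a \<in> A \<Longrightarrow> b \<in> A \<Longrightarrow> a \<noteq> b \<Longrightarrow> disjnt (B a) (B b)"
    and fB: "\<And>a x. a \<in> A \<Longrightarrow> x \<in> B a \<Longrightarrow> f x = f a"
    and branch: "\<And>a. a \<in> A \<Longrightarrow> \<exists>x\<in>B a. r x = r y \<and> h (m (i x) y) = c a \<and> \<sigma> (x, m (i x) y) = d a"
    and supp: "\<And>x. x \<in> G \<Longrightarrow> r x = r y \<Longrightarrow> f x \<noteq> 0 \<Longrightarrow> x \<in> (\<Union>a\<in>A. B a)"
  shows "(f \<star> h) y = (\<Sum>a\<in>A. d a * f a * c a)"
proof -
  obtain \<phi> where \<phi>: "\<And>a. a \<in> A \<Longrightarrow>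
      \<phi> a \<in> B a \<and> r (\<phi> a) = r y \<and> h (m (i (\<phi> a)) y) = c a \<and> \<sigma> (\<phi> a, m (i (\<phi> a)) y) = d a"
    using branch by metis
  have "inj_on \<phi> A"
  proof (rule inj_onI)
    fix a b assume "a \<in> A" "b \<in> A" "\<phi> a = \<phi> b"
    then show "a = b"
      using disj \<phi> by (metis disjnt_iff)
  qed
  have "\<phi> ` A \<subseteq> {x \<in> G. r x = r y}"
    using \<phi> B bisection_subset by blast
  moreover have "x \<in> \<phi> ` A" if x: "x \<in> G" "r x = r y" "f x \<noteq> 0" for x
  proof -
    obtain a where a: "a \<in> A" "x \<in> B a"
      using supp[OF x] by blast
    then have "\<phi> a = x"
      using inj_onD[OF inj_on_r_bisection[OF B]] \<phi> x(2) by metis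
    with a show ?thesis
      by blast
  qed
  ultimately have "(f \<star> h) y = (\<Sum>x\<in>\<phi> ` A. \<sigma> (x, m (i x) y) * f x * h (m (i x) y))"
    using A by (intro conv_eq_sum_fibre[OF y]) auto
  also have "\<dots> = (\<Sum>a\<in>A. \<sigma> (\<phi> a, m (i (\<phi> a)) y) * f (\<phi> a) * h (m (i (\<phi> a)) y))"
    using sum.reindex[OF \<open>inj_on \<phi> A\<close>] by simp
  also have "\<dots> = (\<Sum>a\<in>A. d a * f a * c a)"
  proof (rule sum.cong[OF refl])
    fix a assume a: "a \<in> A"
    then have "f (\<phi> a) = f a"
      using fB \<phi> by blast
    with \<phi>[OF a] show "\<sigma> (\<phi> a, m (i (\<phi> a)) y) * f (\<phi> a) * h (m (i (\<phi> a)) y) = d a * f a * c a"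
      by simp
  qed
  finally show ?thesis .
qed

lemma disjoint_branchesE:
  assumes f: "f \<in> steinberg T" and h: "h \<in> steinberg T" and \<gamma>: "\<gamma> \<in> G"
    and A: "finite A" "\<And>a. a \<in> A \<Longrightarrow> a \<in> G \<and> r a = r \<gamma>"
  obtains B N where "\<And>a. a \<in> A \<Longrightarrow> open_bisection T s r (B a) \<and> a \<in> B a \<and> openin T (N a) \<and> \<gamma> \<in> N a"
    and "\<And>a b. a \<in> A \<Longrightarrow> b \<in> A \<Longrightarrow> a \<noteq> b \<Longrightarrow> disjnt (B a) (B b)"
    and "\<And>a x. a \<in> A \<Longrightarrow> x \<in> B a \<Longrightarrow> f x = f a"
    and "\<And>a y. a \<in> A \<Longrightarrow> y \<in> N a \<Longrightarrow> y \<in> G \<and> (\<exists>x\<in>B a. r x = r y \<and>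
        h (m (i x) y) = h (m (i a) \<gamma>) \<and> \<sigma> (x, m (i x) y) = \<sigma> (a, m (i a) \<gamma>))"
proof -
  have "A \<subseteq> G"
    using A(2) by blast
  then obtain P where P: "\<And>a. a \<in> A \<Longrightarrow> openin T (P a) \<and> a \<in> P a"
    and disjP: "\<And>a b. a \<in> A \<Longrightarrow> b \<in> A \<Longrightarrow> a \<noteq> b \<Longrightarrow> disjnt (P a) (P b)"
    using Hausdorff_space_finite_disjoint_nhds[OF Hausdorff A(1)] by blast
  define branch where "branch a B N \<longleftrightarrow> open_bisection T s r B \<and> a \<in> B \<and> B \<subseteq> P a \<and>
      (\<forall>x\<in>B. f x = f a) \<and> openin T N \<and> \<gamma> \<in> N \<and> (\<forall>y\<in>N. y \<in> G \<and> (\<exists>x\<in>B. r x = r y \<and>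
        h (m (i x) y) = h (m (i a) \<gamma>) \<and> \<sigma> (x, m (i x) y) = \<sigma> (a, m (i a) \<gamma>)))" for a B N
  have "\<exists>B N. branch a B N" if "a \<in> A" for a
  proof -
    have "a \<in> G" "r a = r \<gamma>" "openin T (P a)" "a \<in> P a"
      using that A(2) P by auto
    then obtain B N where "open_bisection T s r B" "a \<in> B" "B \<subseteq> P a" "\<And>x. x \<in> B \<Longrightarrow> f x = f a"
      "openin T N" "\<gamma> \<in> N" "\<And>y. y \<in> N \<Longrightarrow> y \<in> G \<and> (\<exists>x\<in>B. r x = r y \<and>
        h (m (i x) y) = h (m (i a) \<gamma>) \<and> \<sigma> (x, m (i x) y) = \<sigma> (a, m (i a) \<gamma>))"
      using conv_branch_nhdE[OF f h _ _ \<gamma>] by metis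
    then have "branch a B N"
      unfolding branch_def by blast
    then show ?thesis
      by blast
  qed
  then obtain B N where BN: "\<And>a. a \<in> A \<Longrightarrow> branch a (B a) (N a)"
    by metis
  show thesis
  proof (rule that)
    show "open_bisection T s r (B a) \<and> a \<in> B a \<and> openin T (N a) \<and> \<gamma> \<in> N a" if "a \<in> A" for a
      using BN[OF that] unfolding branch_def by blast
    show "disjnt (B a) (B b)" if "a \<in> A" "b \<in> A" "a \<noteq> b" for a b
    proof -
      have "B a \<subseteq> P a" "B b \<subseteq> P b"
        using BN that unfolding branch_def by blast+
      with disjP[OF that] show ?thesis
        by (meson disjnt_subset1 disjnt_subset2)
    qed
    show "f x = f a" if "a \<in> A" "x \<in> B a" for a x
      using BN that unfolding branch_def by blast
    show "y \<in> G \<and> (\<exists>x\<in>B a. r x = r y \<and>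
        h (m (i x) y) = h (m (i a) \<gamma>) \<and> \<sigma> (x, m (i x) y) = \<sigma> (a, m (i a) \<gamma>))"
      if "a \<in> A" "y \<in> N a" for a y
      using BN that unfolding branch_def by blast
  qed
qed

lemma conv_locally_constant:
  assumes f: "f \<in> steinberg T" and h: "h \<in> steinberg T" and \<gamma>: "\<gamma> \<in> G"
  shows "\<exists>W. openin T W \<and> \<gamma> \<in> W \<and> (\<forall>y\<in>W. (f \<star> h) y = (f \<star> h) \<gamma>)"
proof -
  define A where "A = {a. f a \<noteq> 0 \<and> r a = r \<gamma>}"
  have "finite A"
    using finite_r_fibre[OF compactin_steinberg_support[OF f]] unfolding A_def by simp
  moreover have "\<And>a. a \<in> A \<Longrightarrow> a \<in> G \<and> r a = r \<gamma>"
    unfolding A_def using steinberg_vanishes[OF f] by blast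
  ultimately obtain B N where B: "\<And>a. a \<in> A \<Longrightarrow> open_bisection T s r (B a) \<and> a \<in> B a \<and> openin T (N a) \<and> \<gamma> \<in> N a"
    and disj: "\<And>a b. a \<in> A \<Longrightarrow> b \<in> A \<Longrightarrow> a \<noteq> b \<Longrightarrow> disjnt (B a) (B b)"
    and fB: "\<And>a x. a \<in> A \<Longrightarrow> x \<in> B a \<Longrightarrow> f x = f a"
    and NB: "\<And>a y. a \<in> A \<Longrightarrow> y \<in> N a \<Longrightarrow> y \<in> G \<and> (\<exists>x\<in>B a. r x = r y \<and>
        h (m (i x) y) = h (m (i a) \<gamma>) \<and> \<sigma> (x, m (i x) y) = \<sigma> (a, m (i a) \<gamma>))"
    using disjoint_branchesE[OF f h \<gamma>] by blast
  \<comment> \<open>the support of f outside the branches B a has closed range image, missing r \<gamma>\<close>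
  define C where "C = {x. f x \<noteq> 0} \<inter> (G - (\<Union>a\<in>A. B a))"
  have "\<And>a. a \<in> A \<Longrightarrow> openin T (B a)"
    using B openin_bisection by blast
  then have "closedin T (G - (\<Union>a\<in>A. B a))"
    by (intro closedin_diff closedin_topspace openin_Union) auto
  then have "compactin T C"
    unfolding C_def by (rule compact_Int_closedin[OF compactin_steinberg_support[OF f]])
  then have "closedin T (r ` C)"
    by (rule compactin_imp_closedin[OF Hausdorff image_compactin[OF _ continuous_r]])
  then have "openin T {y \<in> G. r y \<in> G - r ` C}"
    by (intro openin_continuous_map_preimage[OF continuous_r] openin_diff openin_topspace)
  then have openW: "openin T ({y \<in> G. r y \<in> G - r ` C} \<inter> \<Inter>(N ` A))"
    using B \<open>finite A\<close> by (intro openin_Int_Inter) auto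
  define W where "W = {y \<in> G. r y \<in> G - r ` C} \<inter> \<Inter>(N ` A)"
  have "r c \<noteq> r \<gamma>" if "c \<in> C" for c
    using that B unfolding A_def C_def by blast
  then have "r \<gamma> \<notin> r ` C"
    by (metis imageE)
  then have "\<gamma> \<in> W"
    unfolding W_def using \<gamma> B by auto
  have "(f \<star> h) y = (\<Sum>a\<in>A. \<sigma> (a, m (i a) \<gamma>) * f a * h (m (i a) \<gamma>))" if y: "y \<in> W" for y
  proof (rule conv_eq_sum_branches[OF _ \<open>finite A\<close> _ disj fB])
    show "y \<in> G" "\<And>a. a \<in> A \<Longrightarrow> open_bisection T s r (B a)"
      using y B unfolding W_def by auto
    show "\<exists>x\<in>B a. r x = r y \<and> h (m (i x) y) = h (m (i a) \<gamma>) \<and> \<sigma> (x, m (i x) y) = \<sigma> (a, m (i a) \<gamma>)"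
      if "a \<in> A" for a
      using NB[OF that] y that unfolding W_def by blast
    show "x \<in> (\<Union>a\<in>A. B a)" if x: "x \<in> G" "r x = r y" "f x \<noteq> 0" for x
    proof (rule ccontr)
      assume "x \<notin> (\<Union>a\<in>A. B a)"
      then have "x \<in> C"
        using x unfolding C_def by blast
      then have "r y \<in> r ` C"
        using x(2) by (metis image_eqI)
      with y show False
        unfolding W_def by blast
    qed
  qed
  with \<open>\<gamma> \<in> W\<close> openW show ?thesis
    unfolding W_def by (metis (no_types, lifting))
qed

lemma conv_in_steinberg:
  assumes f: "f \<in> steinberg T" and h: "h \<in> steinberg T"
  shows "f \<star> h \<in> steinberg T"
proof (rule steinbergI)
  let ?S = "({x. f x \<noteq> 0} \<times> {x. h x \<noteq> 0}) \<inter> composable T s r"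
  have "compactin (prod_topology T T) ?S"
    using compactin_steinberg_support[OF f] compactin_steinberg_support[OF h]
    by (intro compact_Int_closedin closedin_composable) (simp add: compactin_Times)
  then show "compactin T ((\<lambda>(a, b). m a b) ` ?S)"
    by (intro image_compactin[OF _ continuous_mult]) (simp add: compactin_subtopology)
  show "(f \<star> h) \<gamma> = 0" if "\<gamma> \<notin> (\<lambda>(a, b). m a b) ` ?S" for \<gamma>
  proof (rule ccontr)
    assume "(f \<star> h) \<gamma> \<noteq> 0"
    then obtain a b where "a \<in> G" "b \<in> G" "s a = r b" "m a b = \<gamma>" "f a \<noteq> 0" "h b \<noteq> 0"
      by (rule conv_nonzeroE)
    with that show False
      unfolding composable_def by (metis (mono_tags, lifting) IntI SigmaI case_prod_conv image_eqI mem_Collect_eq)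
  qed
qed (use conv_outside conv_locally_constant f h in auto)

section \<open>Ideals of the Steinberg algebra\<close>

lemma ideal_subset_steinberg: "two_sided_ideal T m s r \<sigma> I \<Longrightarrow> I \<subseteq> steinberg T"
  and ideal_zero: "two_sided_ideal T m s r \<sigma> I \<Longrightarrow> (\<lambda>_. 0) \<in> I"
  and ideal_diff: "two_sided_ideal T m s r \<sigma> I \<Longrightarrow> f \<in> I \<Longrightarrow> h \<in> I \<Longrightarrow> (\<lambda>x. f x - h x) \<in> I"
  and ideal_conv_left: "two_sided_ideal T m s r \<sigma> I \<Longrightarrow> a \<in> steinberg T \<Longrightarrow> f \<in> I \<Longrightarrow> a \<star> f \<in> I"
  and ideal_conv_right: "two_sided_ideal T m s r \<sigma> I \<Longrightarrow> a \<in> steinberg T \<Longrightarrow> f \<in> I \<Longrightarrow> f \<star> a \<in> I"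
  unfolding two_sided_ideal_def by blast+

lemma conv_indicator_units_both:
  assumes V: "compactin T V" "openin T V" "V \<subseteq> G0" and g: "g \<in> steinberg T"
  shows "(indicator V \<star> g \<star> indicator V) \<gamma> = (if r \<gamma> \<in> V \<and> s \<gamma> \<in> V then g \<gamma> else 0)"
proof -
  have "indicator V \<star> g \<in> steinberg T"
    using conv_in_steinberg[OF indicator_in_steinberg[OF Hausdorff V(1,2)] g] .
  then show ?thesis
    using conv_indicator_units_right[OF V(3)] conv_indicator_units_left[OF V(3) g] by simp
qed

lemma indicator_in_ideal_if_scaled:
  assumes I: "two_sided_ideal T m s r \<sigma> I" and V: "compactin T V" "openin T V" "V \<subseteq> G0"
    and c: "c \<noteq> 0" "(\<lambda>x. c * indicator V x) \<in> I"
  shows "indicator V \<in> I"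
proof -
  have "(\<lambda>x. inverse c * indicator V x) \<star> (\<lambda>x. c * indicator V x) \<in> I"
    using ideal_conv_left[OF I scaled_indicator_in_steinberg[OF Hausdorff V(1,2)] c(2)] .
  moreover have "(\<lambda>x. inverse c * indicator V x) \<star> (\<lambda>x. c * indicator V x) = indicator V"
  proof
    fix \<gamma>
    have "((\<lambda>x. inverse c * indicator V x) \<star> (\<lambda>x. c * indicator V x)) \<gamma> =
        (if r \<gamma> \<in> V then inverse c * (c * indicator V \<gamma>) else 0)"
      by (rule conv_scaled_indicator_units_left[OF V(3) scaled_indicator_in_steinberg[OF Hausdorff V(1,2)]])
    moreover have "r \<gamma> = \<gamma>" if "\<gamma> \<in> V"
      using that V(3) units_iff_r by blast
    ultimately show "((\<lambda>x. inverse c * indicator V x) \<star> (\<lambda>x. c * indicator V x)) \<gamma> = indicator V \<gamma>"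
      using c(1) by (auto simp: indicator_def)
  qed
  ultimately show ?thesis
    by simp
qed

lemma conv_indicator_units_both_eq_scaled:
  assumes V: "compactin T V" "openin T V" "V \<subseteq> G0" and g: "g \<in> steinberg T"
    and const: "\<And>x. x \<in> V \<Longrightarrow> g x = c"
    and avoid: "\<And>\<gamma>. \<gamma> \<in> G - G0 \<Longrightarrow> g \<gamma> \<noteq> 0 \<Longrightarrow> \<not> (r \<gamma> \<in> V \<and> s \<gamma> \<in> V)"
  shows "indicator V \<star> g \<star> indicator V = (\<lambda>\<gamma>. c * indicator V \<gamma>)"
proof
  fix \<gamma>
  show "(indicator V \<star> g \<star> indicator V) \<gamma> = c * indicator V \<gamma>"
  proof (cases "\<gamma> \<in> G0")
    case True
    then have "r \<gamma> = \<gamma>" "s \<gamma> = \<gamma>"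
      using units_iff units_iff_r by blast+
    with const show ?thesis
      using conv_indicator_units_both[OF V g] by (simp add: indicator_def)
  next
    case False
    then have "\<gamma> \<notin> V" "\<not> (r \<gamma> \<in> V \<and> s \<gamma> \<in> V \<and> g \<gamma> \<noteq> 0)"
      using V(3) avoid[of \<gamma>] steinberg_vanishes[OF g] by auto
    then show ?thesis
      using conv_indicator_units_both[OF V g] by auto
  qed
qed

(* Effectiveness yields units V near u such that no arrow outside G0 in the support of g
   starts and ends in V. *)
lemma ideal_contains_unit_indicator:
  assumes eff: "effective T s r" and I: "two_sided_ideal T m s r \<sigma> I"
    and g: "g \<in> I" and u: "u \<in> G0" "g u \<noteq> 0"
  obtains V where "compactin T V" "openin T V" "V \<subseteq> G0" "V \<noteq> {}" "indicator V \<in> I"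
proof -
  have gS: "g \<in> steinberg T"
    using ideal_subset_steinberg[OF I] g by blast
  obtain W where W: "openin T W" "u \<in> W" "\<forall>y\<in>W. g y = g u"
    using steinberg_locally_constant[OF gS] u units_subset by blast
  define K where "K = {x. g x \<noteq> 0} \<inter> (G - G0)"
  have "closedin T (G - G0)"
    using openin_units by (simp add: closedin_diff)
  then have "compactin T K"
    unfolding K_def by (rule compact_Int_closedin[OF compactin_steinberg_support[OF gS]])
  moreover have "K \<inter> G0 = {}" "openin T (W \<inter> G0)" "W \<inter> G0 \<noteq> {}"
    unfolding K_def using W(1,2) u(1) openin_units by auto
  ultimately obtain V' where V': "openin T V'" "V' \<noteq> {}" "V' \<subseteq> W \<inter> G0"
    and avoid: "\<And>\<gamma>. \<gamma> \<in> K \<Longrightarrow> \<not> (r \<gamma> \<in> V' \<and> s \<gamma> \<in> V')"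
    using effective_avoid_compact[OF eff, of K "W \<inter> G0"] by blast
  then obtain x where "x \<in> V'"
    by blast
  then obtain V where V: "open_bisection T s r V" "compactin T V" "x \<in> V" "V \<subseteq> V'"
    using compact_open_bisection_nhd[OF V'(1)] by blast
  have oV: "openin T V" and VG0: "V \<subseteq> G0"
    using openin_bisection[OF V(1)] V(4) V'(3) by auto
  have "indicator V \<star> g \<star> indicator V = (\<lambda>\<gamma>. g u * indicator V \<gamma>)"
  proof (rule conv_indicator_units_both_eq_scaled[OF V(2) oV VG0 gS])
    show "g y = g u" if "y \<in> V" for y
      using that V(4) V'(3) W(3) by blast
    show "\<not> (r \<gamma> \<in> V \<and> s \<gamma> \<in> V)" if "\<gamma> \<in> G - G0" "g \<gamma> \<noteq> 0" for \<gamma>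
      using that avoid[of \<gamma>] V(4) unfolding K_def by blast
  qed
  moreover have "indicator V \<star> g \<star> indicator V \<in> I"
    using indicator_in_steinberg[OF Hausdorff V(2) oV] g
    by (intro ideal_conv_left[OF I] ideal_conv_right[OF I])
  ultimately have "indicator V \<in> I"
    using indicator_in_ideal_if_scaled[OF I V(2) oV VG0] u by simp
  with V(2,3) oV VG0 that show thesis
    by blast
qed

definition ideal_unit_set :: "('g \<Rightarrow> 'k) set \<Rightarrow> 'g set \<Rightarrow> bool"
  where "ideal_unit_set I W \<longleftrightarrow> compactin T W \<and> openin T W \<and> W \<subseteq> G0 \<and> indicator W \<in> I"

lemma ideal_unit_set_Un:
  assumes I: "two_sided_ideal T m s r \<sigma> I" and W: "ideal_unit_set I W" "ideal_unit_set I W'"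
  shows "ideal_unit_set I (W \<union> W')"
proof -
  have W1: "compactin T W" "openin T W" "W \<subseteq> G0" "indicator W \<in> I"
    and W2: "compactin T W'" "openin T W'" "W' \<subseteq> G0" "indicator W' \<in> I"
    using W unfolding ideal_unit_set_def by auto
  have "indicator W \<star> indicator W' = indicator (W \<inter> W')"
  proof
    fix \<gamma>
    have "s \<gamma> = \<gamma>" if "\<gamma> \<in> W"
      using that W1(3) units_iff by blast
    then show "(indicator W \<star> indicator W') \<gamma> = indicator (W \<inter> W') \<gamma>"
      using conv_indicator_units_right[OF W2(3) indicator_in_steinberg[OF Hausdorff W1(1,2)]]
      by (auto simp: indicator_def)
  qed
  then have "indicator (W \<inter> W') \<in> I"
    using ideal_conv_right[OF I indicator_in_steinberg[OF Hausdorff W2(1,2)] W1(4)] by simp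
  then have "(\<lambda>x. indicator W x - (indicator (W \<inter> W') x - indicator W' x)) \<in> I"
    by (intro ideal_diff[OF I] W1(4) W2(4))
  moreover have "(\<lambda>x. indicator W x - (indicator (W \<inter> W') x - indicator W' x) :: 'k) = indicator (W \<union> W')"
    by (rule ext) (auto simp: indicator_def)
  ultimately show ?thesis
    using W1 W2 unfolding ideal_unit_set_def by (auto intro: compactin_Un)
qed

lemma ideal_unit_set_Union:
  assumes I: "two_sided_ideal T m s r \<sigma> I" and "finite \<F>" "\<And>W. W \<in> \<F> \<Longrightarrow> ideal_unit_set I W"
  shows "ideal_unit_set I (\<Union>\<F>)"
  using assms(2,3)
proof (induction \<F> rule: finite_induct)
  case empty
  have "indicator {} = (\<lambda>_::'g. 0::'k)"
    by (simp add: fun_eq_iff)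
  then show ?case
    using ideal_zero[OF I] unfolding ideal_unit_set_def by simp
next
  case (insert W \<F>)
  then show ?case
    using ideal_unit_set_Un[OF I] by simp
qed

lemma ideal_unit_set_range:
  assumes I: "two_sided_ideal T m s r \<sigma> I" and W: "ideal_unit_set I W" and \<gamma>: "\<gamma> \<in> G" "s \<gamma> \<in> W"
  obtains W' where "ideal_unit_set I W'" "r \<gamma> \<in> W'"
proof -
  have W': "compactin T W" "openin T W" "W \<subseteq> G0" "indicator W \<in> I"
    using W unfolding ideal_unit_set_def by auto
  have "openin T {x \<in> G. s x \<in> W}"
    using openin_continuous_map_preimage[OF continuous_s W'(2)] .
  then obtain B where B: "open_bisection T s r B" "compactin T B" "\<gamma> \<in> B" "B \<subseteq> {x \<in> G. s x \<in> W}"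
    using compact_open_bisection_nhd \<gamma> by blast
  have oB: "openin T B"
    using openin_bisection[OF B(1)] .
  have "indicator B \<star> indicator W = indicator B"
  proof
    fix x
    show "(indicator B \<star> indicator W) x = indicator B x"
      using conv_indicator_units_right[OF W'(3) indicator_in_steinberg[OF Hausdorff B(2) oB]] B(4)
      by (auto simp: indicator_def)
  qed
  then have "indicator B \<in> I"
    using ideal_conv_left[OF I indicator_in_steinberg[OF Hausdorff B(2) oB] W'(4)] by simp
  then have "indicator B \<star> bisection_adjoint B \<in> I"
    by (rule ideal_conv_right[OF I bisection_adjoint_in_steinberg[OF B(1,2)]])
  then have "indicator (r ` B) \<in> I"
    by (simp add: conv_indicator_bisection_adjoint[OF B(1)])
  moreover have "compactin T (r ` B)" "openin T (r ` B)" "r ` B \<subseteq> G0"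
    using image_compactin[OF B(2) continuous_r] openin_r_image[OF B(1) oB order_refl]
      bisection_subset[OF B(1)] by auto
  ultimately show thesis
    using that B(3) unfolding ideal_unit_set_def by blast
qed

lemma invariant_ideal_unit_support:
  assumes I: "two_sided_ideal T m s r \<sigma> I"
  shows "invariant T s r (\<Union>{W. ideal_unit_set I W})"
proof -
  have range: "r \<gamma> \<in> \<Union>{W. ideal_unit_set I W}" if "\<gamma> \<in> G" "s \<gamma> \<in> \<Union>{W. ideal_unit_set I W}" for \<gamma>
    using that ideal_unit_set_range[OF I] by blast
  have "s \<gamma> \<in> \<Union>{W. ideal_unit_set I W} \<longleftrightarrow> r \<gamma> \<in> \<Union>{W. ideal_unit_set I W}" if "\<gamma> \<in> G" for \<gamma>
    using range[of \<gamma>] range[of "i \<gamma>"] that by auto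
  then show ?thesis
    unfolding invariant_def ideal_unit_set_def by blast
qed

lemma steinberg_subset_ideal_if_units_covered:
  assumes I: "two_sided_ideal T m s r \<sigma> I" and cover: "G0 \<subseteq> \<Union>{W. ideal_unit_set I W}"
  shows "steinberg T \<subseteq> I"
proof
  fix h :: "'g \<Rightarrow> 'k" assume h: "h \<in> steinberg T"
  have compact: "compactin T (r ` {x. h x \<noteq> 0})"
    using image_compactin[OF compactin_steinberg_support[OF h] continuous_r] .
  have "r x \<in> G0" if "h x \<noteq> 0" for x
    using that steinberg_vanishes[OF h] r_in_units by blast
  then have covered: "r ` {x. h x \<noteq> 0} \<subseteq> \<Union>{W. ideal_unit_set I W}"
    using cover by blast
  have "\<And>W. W \<in> {W. ideal_unit_set I W} \<Longrightarrow> openin T W"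
    unfolding ideal_unit_set_def by blast
  then obtain \<F> where \<F>: "finite \<F>" "\<F> \<subseteq> {W. ideal_unit_set I W}" "r ` {x. h x \<noteq> 0} \<subseteq> \<Union>\<F>"
    using compactinD[OF compact _ covered] by blast
  then have U: "ideal_unit_set I (\<Union>\<F>)"
    using ideal_unit_set_Union[OF I] by blast
  then have UG0: "\<Union>\<F> \<subseteq> G0" and UI: "indicator (\<Union>\<F>) \<in> I"
    unfolding ideal_unit_set_def by blast+
  have "indicator (\<Union>\<F>) \<star> h = h"
  proof
    fix x
    have "(indicator (\<Union>\<F>) \<star> h) x = (if r x \<in> \<Union>\<F> then h x else 0)"
      by (rule conv_indicator_units_left[OF UG0 h])
    moreover have "r x \<in> \<Union>\<F>" if "h x \<noteq> 0"
      using that \<F>(3) by blast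
    ultimately show "(indicator (\<Union>\<F>) \<star> h) x = h x"
      by auto
  qed
  moreover have "indicator (\<Union>\<F>) \<star> h \<in> I"
    by (rule ideal_conv_right[OF I h UI])
  ultimately show "h \<in> I"
    by simp
qed

lemma nonzero_ideal_has_unit_set:
  assumes eff: "effective T s r" and I: "two_sided_ideal T m s r \<sigma> I"
    and f: "f \<in> I" "f \<gamma> \<noteq> 0"
  obtains W where "ideal_unit_set I W" "W \<noteq> {}"
proof -
  have fS: "f \<in> steinberg T"
    using ideal_subset_steinberg[OF I] f(1) by blast
  then have \<gamma>: "\<gamma> \<in> G"
    using steinberg_vanishes[of f T \<gamma>] f(2) by blast
  then obtain B where B: "open_bisection T s r B" "compactin T B" "i \<gamma> \<in> B"
    using compact_open_bisection_nhd[OF openin_topspace i_in_G[OF \<gamma>]] by blast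
  have "f \<star> indicator B \<in> I"
    using ideal_conv_right[OF I indicator_in_steinberg[OF Hausdorff B(2) openin_bisection[OF B(1)]] f(1)] .
  moreover have "(f \<star> indicator B) (r \<gamma>) \<noteq> 0"
    using conv_indicator_at_range[OF B(1) \<gamma> B(3)] sigma_nonzero[of \<gamma> "i \<gamma>"] \<gamma> f(2) by simp
  ultimately obtain V where "compactin T V" "openin T V" "V \<subseteq> G0" "V \<noteq> {}" "indicator V \<in> I"
    using ideal_contains_unit_indicator[OF eff I _ r_in_units[OF \<gamma>]] by blast
  then have "ideal_unit_set I V"
    unfolding ideal_unit_set_def by blast
  then show thesis
    using \<open>V \<noteq> {}\<close> by (rule that)
qed

lemma minimal_imp_simple:
  assumes eff: "effective T s r" and min: "minimal T s r"
  shows "simple_steinberg T m s r \<sigma>"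
  unfolding simple_steinberg_def
proof (intro allI impI)
  fix I assume I: "two_sided_ideal T m s r \<sigma> I"
  show "I = {\<lambda>_. 0} \<or> I = steinberg T"
  proof (cases "\<exists>f\<in>I. \<exists>\<gamma>. f \<gamma> \<noteq> 0")
    case True
    then obtain W where W: "ideal_unit_set I W" "W \<noteq> {}"
      using nonzero_ideal_has_unit_set[OF eff I] by blast
    let ?U = "\<Union>{W. ideal_unit_set I W}"
    have "?U \<subseteq> G0" "openin T ?U"
      unfolding ideal_unit_set_def by blast+
    then have "openin (subtopology T G0) ?U"
      using openin_units by (simp add: openin_open_subtopology)
    moreover have "?U \<noteq> {}"
      using W by blast
    ultimately have "?U = G0"
      using min invariant_ideal_unit_support[OF I] unfolding minimal_def by blast
    then show ?thesis
      using steinberg_subset_ideal_if_units_covered[OF I] ideal_subset_steinberg[OF I] by blast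
  next
    case False
    then have "f = (\<lambda>_. 0)" if "f \<in> I" for f
      using that by auto
    then show ?thesis
      using ideal_zero[OF I] by blast
  qed
qed

definition supported_over :: "'g set \<Rightarrow> ('g \<Rightarrow> 'k) set"
  where "supported_over U = {f \<in> steinberg T. \<forall>\<gamma>. f \<gamma> \<noteq> 0 \<longrightarrow> s \<gamma> \<in> U}"

lemma two_sided_ideal_supported_over:
  assumes U: "invariant T s r U"
  shows "two_sided_ideal T m s r \<sigma> (supported_over U)"
  unfolding two_sided_ideal_def
proof (intro conjI ballI)
  show "supported_over U \<subseteq> steinberg T"
    unfolding supported_over_def by blast
  show "(\<lambda>_. 0) \<in> supported_over U"
    unfolding supported_over_def using steinberg_zero[of T] by simp
  fix f h assume f: "f \<in> supported_over U" and h: "h \<in> supported_over U"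
  then have fS: "f \<in> steinberg T" and hS: "h \<in> steinberg T"
    unfolding supported_over_def by auto
  have "s \<gamma> \<in> U" if "f \<gamma> - h \<gamma> \<noteq> 0" for \<gamma>
    using f h that unfolding supported_over_def by (cases "f \<gamma> = 0") auto
  then show "(\<lambda>x. f x - h x) \<in> supported_over U"
    unfolding supported_over_def using steinberg_diff[OF fS hS] by blast
next
  fix f and a :: "'g \<Rightarrow> 'k" assume f: "f \<in> supported_over U" and a: "a \<in> steinberg T"
  then have fS: "f \<in> steinberg T" and fU: "\<And>\<gamma>. f \<gamma> \<noteq> 0 \<Longrightarrow> s \<gamma> \<in> U"
    unfolding supported_over_def by auto
  have "s \<gamma> \<in> U" if nz: "(a \<star> f) \<gamma> \<noteq> 0" for \<gamma>
  proof -
    obtain x y where "x \<in> G" "y \<in> G" "s x = r y" "m x y = \<gamma>" "f y \<noteq> 0"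
      using conv_nonzeroE[OF nz] by blast
    then show ?thesis
      using fU by auto
  qed
  then show "a \<star> f \<in> supported_over U"
    unfolding supported_over_def using conv_in_steinberg[OF a fS] by blast
  have "s \<gamma> \<in> U" if nz: "(f \<star> a) \<gamma> \<noteq> 0" for \<gamma>
  proof -
    obtain x y where xy: "x \<in> G" "y \<in> G" "s x = r y" "m x y = \<gamma>" "f x \<noteq> 0"
      using conv_nonzeroE[OF nz] by blast
    then have "r \<gamma> \<in> U"
      using fU[of x] U unfolding invariant_def by auto
    then show ?thesis
      using U xy unfolding invariant_def by auto
  qed
  then show "f \<star> a \<in> supported_over U"
    unfolding supported_over_def using conv_in_steinberg[OF fS a] by blast
qed

lemma indicator_units_in_supported_over_iff:
  assumes W: "compactin T W" "openin T W" "W \<subseteq> G0"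
  shows "indicator W \<in> supported_over U \<longleftrightarrow> W \<subseteq> U"
proof -
  have "s \<gamma> = \<gamma>" if "\<gamma> \<in> W" for \<gamma>
    using that W(3) units_iff by blast
  then show ?thesis
    using indicator_in_steinberg[OF Hausdorff W(1,2)]
    unfolding supported_over_def by (auto simp: indicator_def)
qed

lemma simple_imp_minimal:
  assumes simple: "simple_steinberg T m s r \<sigma>"
  shows "minimal T s r"
  unfolding minimal_def
proof (intro allI impI)
  fix U assume U: "openin (subtopology T G0) U \<and> invariant T s r U"
  then have oU: "openin T U" and UG0: "U \<subseteq> G0"
    using openin_trans_full[OF _ openin_units] unfolding invariant_def by blast+
  show "U = {} \<or> U = G0"
  proof (rule ccontr)
    assume "\<not> (U = {} \<or> U = G0)"
    then obtain x y where "x \<in> U" "y \<in> G0" "y \<notin> U"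
      using UG0 by blast
    obtain B where B: "open_bisection T s r B" "compactin T B" "x \<in> B" "B \<subseteq> U"
      using compact_open_bisection_nhd[OF oU \<open>x \<in> U\<close>] by blast
    then have "indicator B \<in> supported_over U"
      using indicator_units_in_supported_over_iff[OF B(2) openin_bisection[OF B(1)]] UG0 by blast
    moreover have "indicator B x \<noteq> (0::'k)"
      using B(3) by simp
    ultimately have "supported_over U \<noteq> {\<lambda>_. 0}"
      by force
    obtain B' where B': "open_bisection T s r B'" "compactin T B'" "y \<in> B'" "B' \<subseteq> G0"
      using compact_open_bisection_nhd[OF openin_units \<open>y \<in> G0\<close>] by blast
    then have "indicator B' \<notin> supported_over U"
      using indicator_units_in_supported_over_iff[OF B'(2) openin_bisection[OF B'(1)]] \<open>y \<notin> U\<close>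
      by blast
    then have "supported_over U \<noteq> steinberg T"
      using indicator_in_steinberg[OF Hausdorff B'(2) openin_bisection[OF B'(1)]] by blast
    with \<open>supported_over U \<noteq> {\<lambda>_. 0}\<close> show False
      using simple two_sided_ideal_supported_over[OF conjunct2[OF U]]
      unfolding simple_steinberg_def by blast
  qed
qed

end

theorem theorem6p2:
  fixes T :: "'g topology" and m :: "'g \<Rightarrow> 'g \<Rightarrow> 'g" and i s r :: "'g \<Rightarrow> 'g"
    and \<sigma> :: "'g \<times> 'g \<Rightarrow> 'k::field"
  assumes "lch_top_groupoid T m i s r"
    and "ample T s r"
    and "effective T s r"
    and "cocycle T m s r \<sigma>"
  shows "simple_steinberg T m s r \<sigma> \<longleftrightarrow> minimal T s r"
proof -
  interpret twisted_ample_groupoid T m i s r \<sigma>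
    using assms by unfold_locales
  show ?thesis
    using simple_imp_minimal minimal_imp_simple[OF assms(3)] by blast
qed

end
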